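(* Let $\varphi\in(\tfrac34,1)$ be badly approximable and let $1<\alpha\le\tfrac32$. If $X$ is a Sturmian word generated by $\varphi$, then $X$ is a ground-state configuration of $H_\alpha$ that is stable with respect to $\mathcal{PS}_\varphi$; that is, for every finite set $P$ of patterns there exists $\lambda>0$ such that for every $(\lambda,P)$-perturbation $\widetilde H$ of $H_\alpha$ we have $\rho_{\widetilde H}(X)\le\rho_{\widetilde H}(W)$ for all $W\in\mathcal{PS}_\varphi$.
   Context: Circle $=\mathbb{R}/\mathbb{Z}$. For irrational $\varphi$, $X\in\{0,1\}^{\mathbb{Z}}$ is a Sturmian word generated by $\varphi$ if there are $x\in\mathbb{R}/\mathbb{Z}$ and $P_0\in\{[0,\varphi),(0,\varphi]\}$ with $X(n)=0$ if $x+n\varphi\in P_0$ and $X(n)=1$ otherwise. A real $\varphi$ is badly approximable if there is $c>0$ with $|\varphi-p/q|>c/q^2$ for all rationals $p/q$. Forbidden distances: $F=\{k\in\mathbb{N}: k\varphi \bmod 1\in[1-\varphi,\varphi]\}$. Fix $m\in\mathbb{N}$ such that the sequences in $\{0,1\}^{\mathbb{Z}}$ containing no $m$ consecutive $0$'s and no two $1$'s at a distance in $F$ are exactly the Sturmian words generated by $\varphi$ (such $m$ exists). A pattern is a configuration in $\{0,1\}^A$ on a finite set $A\subset\mathbb{Z}$, considered up to translation. A (translation-invariant) Hamiltonian is given by an energy function $\Phi$ on patterns; for a finite word $w$ (or a finite segment of a sequence), $H(w)$ is the sum of $\Phi(p)$ over all occurrences of patterns $p$ inside $w$. $H_\alpha$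 is the Hamiltonian assigning energy $1/n^\alpha$ to the pattern consisting of two $1$'s at distance $n$ for each $n\in F$, energy $1$ to the pattern of $m$ consecutive $0$'s, and energy $0$ to all other patterns. Energy density: $\rho_H(X)=\liminf_{k\to\infty}\frac{H(X([-k,k]))}{2k+1}$, where $X([-k,k])=(X(i))_{i=-k}^k$. For a finite set of patterns $P$ and $\lambda>0$, $\widetilde H$ (with energies $\widetilde\Phi$) is a $(\lambda,P)$-perturbation of $H$ (energies $\Phi$) if $|\Phi(p)-\widetilde\Phi(p)|<\lambda$ for $p\in P$ and $\Phi(q)=\widetilde\Phi(q)$ for $q\notin P$. $\mathcal{PS}_\varphi$ is the set of periodic sequences $Y\in\{0,1\}^{\mathbb{Z}}$ whose period word (one block of length equal to a period) is a subword of some Sturmian word generated by $\varphi$. *)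

theory Defs
  imports "HOL-Analysis.Analysis"
begin

text \<open>Configurations in {0,1}^Z are encoded as int => bool, True = symbol 1, False = symbol 0.
  Points of the circle R/Z are represented by reals, reduced with frac.\<close>

type_synonym config = "int \<Rightarrow> bool"

definition sturmian :: "real \<Rightarrow> config \<Rightarrow> bool" where
  "sturmian \<phi> X \<longleftrightarrow> (\<exists>x::real.
      (\<forall>n::int. (\<not> X n) \<longleftrightarrow> frac (x + of_int n * \<phi>) \<in> {0..<\<phi>}) \<or>
      (\<forall>n::int. (\<not> X n) \<longleftrightarrow> frac (x + of_int n * \<phi>) \<in> {0<..\<phi>}))"

definition badly_approximable :: "real \<Rightarrow> bool" where
  "badly_approximable \<phi> \<longleftrightarrow>
     (\<exists>c>0. \<forall>p::int. \<forall>q::int. q > 0 \<longrightarrow> \<bar>\<phi> - of_int p / of_int q\<bar> > c / (of_int q)\<^sup>2)"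

definition forbidden :: "real \<Rightarrow> nat set" where
  "forbidden \<phi> = {k. k \<ge> 1 \<and> frac (real k * \<phi>) \<in> {1 - \<phi>..\<phi>}}"

definition good_m :: "real \<Rightarrow> nat \<Rightarrow> bool" where
  "good_m \<phi> m \<longleftrightarrow> (\<forall>X::config.
     ((\<forall>n::int. \<not> (\<forall>i::nat. i < m \<longrightarrow> \<not> X (n + int i))) \<and>
      (\<forall>a b::int. a < b \<and> X a \<and> X b \<longrightarrow> nat (b - a) \<notin> forbidden \<phi>))
     \<longleftrightarrow> sturmian \<phi> X)"

text \<open>Patterns: partial maps int => bool option with finite nonempty domain, normalised
  (as representative of the translation class) so that the least element of the domain is 0.\<close>
type_synonym pattern = "int \<Rightarrow> bool option"

definition patterns :: "pattern set" where
  "patterns = {p. finite (dom p) \<and> dom p \<noteq> {} \<and> Min (dom p) = 0}"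

definition pat_of :: "config \<Rightarrow> int set \<Rightarrow> pattern" where
  "pat_of X B = (\<lambda>i. if i + Min B \<in> B then Some (X (i + Min B)) else None)"

text \<open>H(X([a,b])): sum of energies over all occurrences of patterns inside the segment;
  each nonempty subset B of [a,b] carries exactly one pattern occurrence.\<close>
definition ham :: "(pattern \<Rightarrow> real) \<Rightarrow> config \<Rightarrow> int \<Rightarrow> int \<Rightarrow> real" where
  "ham \<Phi> X a b = (\<Sum>B \<in> Pow {a..b} - {{}}. \<Phi> (pat_of X B))"

definition density :: "(pattern \<Rightarrow> real) \<Rightarrow> config \<Rightarrow> ereal" where
  "density \<Phi> X = liminf (\<lambda>k::nat. ereal (ham \<Phi> X (- int k) (int k) / (2 * real k + 1)))"

definition pair_pat :: "nat \<Rightarrow> pattern" where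
  "pair_pat n = (\<lambda>i. if i = 0 \<or> i = int n then Some True else None)"

definition zeros_pat :: "nat \<Rightarrow> pattern" where
  "zeros_pat m = (\<lambda>i. if 0 \<le> i \<and> i < int m then Some False else None)"

definition Phi_alpha :: "real \<Rightarrow> nat \<Rightarrow> real \<Rightarrow> pattern \<Rightarrow> real" where
  "Phi_alpha \<phi> m \<alpha> p =
     (if p = zeros_pat m then 1
      else if (\<exists>n \<in> forbidden \<phi>. p = pair_pat n)
        then 1 / (real (THE n. n \<in> forbidden \<phi> \<and> p = pair_pat n)) powr \<alpha>
      else 0)"

definition perturbation :: "real \<Rightarrow> pattern set \<Rightarrow> (pattern \<Rightarrow> real) \<Rightarrow> (pattern \<Rightarrow> real) \<Rightarrow> bool" where
  "perturbation lam P \<Phi> \<Phi>' \<longleftrightarrow>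
     (\<forall>p \<in> P. \<bar>\<Phi> p - \<Phi>' p\<bar> < lam) \<and> (\<forall>q \<in> patterns - P. \<Phi> q = \<Phi>' q)"

definition PS :: "real \<Rightarrow> config set" where
  "PS \<phi> = {Y. \<exists>p::nat. p > 0 \<and> (\<forall>n. Y (n + int p) = Y n) \<and>
     (\<exists>s::int. \<exists>Z. sturmian \<phi> Z \<and> (\<exists>j::int. \<forall>i::nat. i < p \<longrightarrow> Y (s + int i) = Z (j + int i)))}"

end

theory Submission
  imports Defs
begin

text \<open>A Sturmian word \<open>X\<close> has zero \<open>H\<^sub>\<alpha>\<close>-energy, and a perturbation only changes the
  energies of the finitely many patterns in \<open>P\<close>.  Every pattern occurs in \<open>X\<close> with a frequency,
  up to an error bounded independently of the window, because the starting points of the rotation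
  at which it occurs form a bounded remainder set (a combination of arcs with lengths in
  \<open>\<int>\<phi> + \<int>\<close>).  A periodic word \<open>W \<in> PS\<^sub>\<phi>\<close> repeats a Sturmian block of length \<open>p\<close>, so its
  pattern frequencies differ from those of \<open>X\<close> by \<open>O(1/p)\<close>.  On the other hand \<open>W\<close> must violate
  the constraints of \<open>H\<^sub>\<alpha>\<close>: for badly approximable \<open>\<phi>\<close> and \<open>\<alpha> \<le> 3/2\<close> its energy per period is
  bounded below by a constant independent of \<open>p\<close>.  Taking \<open>\<lambda>\<close> below this constant divided by the
  total discrepancy of the patterns in \<open>P\<close>, the perturbation gains \<open>W\<close> less than it loses.\<close>

section \<open>Bounded remainder sets of the rotation\<close>

definition carry :: "real \<Rightarrow> int \<Rightarrow> real \<Rightarrow> real" where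
  "carry \<phi> m t = frac t + frac (of_int m * \<phi>) - frac (t + of_int m * \<phi>)"

lemma carry_eq: "carry \<phi> m t = of_bool (1 \<le> frac t + frac (of_int m * \<phi>))"
  by (simp add: carry_def frac_add)

lemma carry_mult_carry:
  "carry \<phi> m t * carry \<phi> k t =
     carry \<phi> (if frac (of_int m * \<phi>) \<le> frac (of_int k * \<phi>) then m else k) t"
  unfolding carry_eq by auto

lemma carry_translate:
  "carry \<phi> m (t + of_int i * \<phi>) = carry \<phi> m (of_int i * \<phi>) + carry \<phi> (i + m) t - carry \<phi> i t"
  by (simp add: carry_def algebra_simps)

lemma carry_minus_one:
  assumes "0 < \<phi>" "\<phi> < 1"
  shows "carry \<phi> (-1) t = of_bool (\<phi> \<le> frac t)"
proof -
  have "frac (- \<phi>) = 1 - \<phi>"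
    using assms by (subst frac_neg) (auto simp: frac_eq elim!: Ints_cases)
  then show ?thesis
    by (simp add: carry_eq)
qed

text \<open>Since \<open>carry \<phi> m t = 1\<close> exactly when \<open>frac t \<ge> 1 - frac (m \<phi>)\<close>, the carries are the
  indicators of the arcs whose length lies in \<open>\<int>\<phi> + \<int>\<close>, the classical bounded remainder
  sets of the rotation.  Their span is closed under products, as such arcs ending at \<open>1\<close> are
  nested.\<close>
inductive carry_span :: "real \<Rightarrow> (real \<Rightarrow> real) \<Rightarrow> bool" for \<phi> where
  const: "carry_span \<phi> (\<lambda>t. c)"
| carry: "carry_span \<phi> (\<lambda>t. c * carry \<phi> m t)"
| add: "carry_span \<phi> f \<Longrightarrow> carry_span \<phi> g \<Longrightarrow> carry_span \<phi> (\<lambda>t. f t + g t)"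

lemma carry_span_scale: "carry_span \<phi> f \<Longrightarrow> carry_span \<phi> (\<lambda>t. c * f t)"
proof (induction rule: carry_span.induct)
  case (const c')
  then show ?case by (rule carry_span.const)
next
  case (carry c' m)
  then show ?case
    using carry_span.carry[of \<phi> "c * c'" m] by (simp add: mult.assoc)
next
  case (add f g)
  then show ?case
    using carry_span.add[of \<phi> "\<lambda>t. c * f t" "\<lambda>t. c * g t"] by (simp add: distrib_left)
qed

lemma carry_span_mult_carry:
  "carry_span \<phi> g \<Longrightarrow> carry_span \<phi> (\<lambda>t. c * carry \<phi> m t * g t)"
proof (induction rule: carry_span.induct)
  case (const c')
  then show ?case
    using carry_span.carry[of \<phi> "c * c'" m] by (simp add: algebra_simps)
next
  case (carry c' k)
  then show ?case
    using carry_span.carry[of \<phi> "c * c'"] by (simp add: algebra_simps carry_mult_carry)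
next
  case (add f g)
  then show ?case
    using carry_span.add[of \<phi> "\<lambda>t. c * carry \<phi> m t * f t" "\<lambda>t. c * carry \<phi> m t * g t"]
    by (simp add: distrib_left)
qed

lemma carry_span_mult:
  "carry_span \<phi> f \<Longrightarrow> carry_span \<phi> g \<Longrightarrow> carry_span \<phi> (\<lambda>t. f t * g t)"
proof (induction rule: carry_span.induct)
  case (const c)
  then show ?case by (rule carry_span_scale)
next
  case (carry c m)
  then show ?case by (rule carry_span_mult_carry)
next
  case (add f f')
  then show ?case
    using carry_span.add[of \<phi> "\<lambda>t. f t * g t" "\<lambda>t. f' t * g t"] by (simp add: distrib_right)
qed

lemma carry_span_prod:
  "finite I \<Longrightarrow> (\<And>i. i \<in> I \<Longrightarrow> carry_span \<phi> (h i)) \<Longrightarrow> carry_span \<phi> (\<lambda>t. \<Prod>i\<in>I. h i t)"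
proof (induction I rule: finite_induct)
  case empty
  then show ?case by (simp add: carry_span.const)
next
  case (insert i I)
  then show ?case
    using carry_span_mult[of \<phi> "h i" "\<lambda>t. \<Prod>i\<in>I. h i t"] by simp
qed

lemma carry_span_carry_translate: "carry_span \<phi> (\<lambda>t. carry \<phi> m (t + of_int i * \<phi>))"
proof -
  have "carry_span \<phi> (\<lambda>t. (carry \<phi> m (of_int i * \<phi>) + 1 * carry \<phi> (i + m) t) + (-1) * carry \<phi> i t)"
    by (intro carry_span.intros)
  then show ?thesis
    by (simp add: carry_translate)
qed

lemma sum_lessThan_add_nat: "(\<Sum>n<a + b. f n) = (\<Sum>n<a. f n) + (\<Sum>n<b. f (a + n))"
  for a b :: nat
  by (induction b) (simp_all add: add.assoc)

lemma sum_diff_translate_le: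
  fixes G :: "int \<Rightarrow> real"
  assumes G: "\<And>n. G n \<in> {0..<1}"
  shows "\<bar>\<Sum>n<L. G (int n) - G (int n + m)\<bar> \<le> \<bar>of_int m\<bar>"
proof -
  have nat_case: "\<bar>\<Sum>n<L. H (int n) - H (int n + int k)\<bar> \<le> real k"
    if H: "\<And>n. H n \<in> {0..<1}" for H :: "int \<Rightarrow> real" and k
  proof -
    \<comment> \<open>both sides equal the sum of \<open>H\<close> over \<open>[0, L + k)\<close>\<close>
    have "(\<Sum>n<L. H (int n)) + (\<Sum>i<k. H (int (L + i))) = (\<Sum>i<k. H (int i)) + (\<Sum>n<L. H (int (k + n)))"
      using sum_lessThan_add_nat[of "\<lambda>n. H (int n)" L k] sum_lessThan_add_nat[of "\<lambda>n. H (int n)" k L]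
      by (simp add: add.commute)
    then have "(\<Sum>n<L. H (int n) - H (int n + int k)) = (\<Sum>i<k. H (int i) - H (int (L + i)))"
      by (simp add: sum_subtractf add.commute)
    also have "\<bar>\<dots>\<bar> \<le> (\<Sum>i<k. \<bar>H (int i) - H (int (L + i))\<bar>)"
      by (rule sum_abs)
    also have "\<dots> \<le> (\<Sum>i<k. 1)"
    proof (rule sum_mono)
      fix i
      show "\<bar>H (int i) - H (int (L + i))\<bar> \<le> 1"
        using H[of "int i"] H[of "int (L + i)"] by auto
    qed
    finally show ?thesis
      by simp
  qed
  show ?thesis
  proof (cases "0 \<le> m")
    case True
    then show ?thesis
      using nat_case[OF G, where k = "nat m"] by simp
  next
    case False
    define G' where "G' n = G (n + m)" for n
    have "(\<Sum>n<L. G (int n) - G (int n + m)) = - (\<Sum>n<L. G' (int n) - G' (int n + int (nat (- m))))"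
      using False by (simp add: G'_def sum_negf[symmetric])
    then show ?thesis
      using nat_case[of G' "nat (- m)"] False G by (simp add: G'_def)
  qed
qed

lemma carry_span_bounded_remainder:
  "carry_span \<phi> f \<Longrightarrow> \<exists>F K. \<forall>t L. \<bar>(\<Sum>n<L. f (t + real n * \<phi>)) - real L * F\<bar> \<le> K"
proof (induction rule: carry_span.induct)
  case (const c)
  have "\<bar>(\<Sum>n<L. c) - real L * c\<bar> \<le> 0" for L :: nat
    by simp
  then show ?case by blast
next
  case (carry c m)
  have "\<bar>(\<Sum>n<L. c * carry \<phi> m (t + real n * \<phi>)) - real L * (c * frac (of_int m * \<phi>))\<bar>
          \<le> \<bar>c\<bar> * \<bar>of_int m\<bar>" for t L
  proof -
    define G where "G n = frac (t + of_int n * \<phi>)" for n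
    have e: "carry \<phi> m (t + real n * \<phi>) = (G (int n) - G (int n + m)) + frac (of_int m * \<phi>)" for n
      by (simp add: carry_def G_def algebra_simps)
    have "(\<Sum>n<L. c * carry \<phi> m (t + real n * \<phi>)) - real L * (c * frac (of_int m * \<phi>))
                 = c * (\<Sum>n<L. G (int n) - G (int n + m))"
      unfolding e distrib_left sum.distrib by (simp add: sum_distrib_left)
    moreover have "\<bar>\<Sum>n<L. G (int n) - G (int n + m)\<bar> \<le> \<bar>of_int m\<bar>"
      by (rule sum_diff_translate_le) (simp add: G_def frac_lt_1)
    ultimately show ?thesis
      by (simp add: abs_mult mult_left_mono)
  qed
  then show ?case by blast
next
  case (add f g)
  then obtain F1 K1 F2 K2 where
      K1: "\<forall>t L. \<bar>(\<Sum>n<L. f (t + real n * \<phi>)) - real L * F1\<bar> \<le> K1" and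
      K2: "\<forall>t L. \<bar>(\<Sum>n<L. g (t + real n * \<phi>)) - real L * F2\<bar> \<le> K2"
    by blast
  have "\<bar>(\<Sum>n<L. f (t + real n * \<phi>) + g (t + real n * \<phi>)) - real L * (F1 + F2)\<bar> \<le> K1 + K2"
    for t L
    using K1[rule_format, of t L] K2[rule_format, of t L] by (simp add: sum.distrib algebra_simps)
  then show ?case by blast
qed

section \<open>Pattern frequencies in Sturmian words\<close>

definition rotation_coding :: "real \<Rightarrow> real \<Rightarrow> config" where
  "rotation_coding \<phi> x n \<longleftrightarrow> \<phi> \<le> frac (x + of_int n * \<phi>)"

definition occurs_at :: "config \<Rightarrow> pattern \<Rightarrow> int \<Rightarrow> bool" where
  "occurs_at Y q s \<longleftrightarrow> (\<forall>i\<in>dom q. q i = Some (Y (s + i)))"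

lemma patternsD:
  assumes "q \<in> patterns"
  shows "finite (dom q)" "0 \<in> dom q" "\<And>i. i \<in> dom q \<Longrightarrow> 0 \<le> i \<and> i \<le> Max (dom q)"
proof -
  have q: "finite (dom q)" "dom q \<noteq> {}" "Min (dom q) = 0"
    using assms by (auto simp: patterns_def)
  then show "finite (dom q)" "0 \<in> dom q"
    using Min_in[of "dom q"] by auto
  show "\<And>i. i \<in> dom q \<Longrightarrow> 0 \<le> i \<and> i \<le> Max (dom q)"
    using q Min_le[of "dom q"] Max_ge[of "dom q"] by fastforce
qed

lemma occurs_at_cong:
  assumes "q \<in> patterns" and "\<And>i. 0 \<le> i \<Longrightarrow> i \<le> Max (dom q) \<Longrightarrow> Y (s + i) = Y' (s' + i)"
  shows "occurs_at Y q s \<longleftrightarrow> occurs_at Y' q s'"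
  using assms patternsD(3)[OF assms(1)] by (auto simp: occurs_at_def)

lemma occurs_at_rotation_coding:
  "occurs_at (rotation_coding \<phi> x) q s \<longleftrightarrow> occurs_at (rotation_coding \<phi> (x + of_int s * \<phi>)) q 0"
  by (simp add: occurs_at_def rotation_coding_def algebra_simps)

lemma sum_lessThan_unit_bounds:
  fixes u :: "nat \<Rightarrow> real"
  assumes "\<And>n. n < N \<Longrightarrow> u n \<in> {0..1}"
  shows "(\<Sum>n<N. u n) \<in> {0..real N}"
proof -
  have "0 \<le> (\<Sum>n<N. u n)"
    using assms by (auto intro: sum_nonneg)
  moreover have "(\<Sum>n<N. u n) \<le> (\<Sum>n<N. 1)"
    using assms by (intro sum_mono) auto
  ultimately show ?thesis
    by simp
qed

lemma of_bool_Ball_eq_prod: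
  "finite A \<Longrightarrow> (of_bool (\<forall>x\<in>A. P x) :: 'a::comm_semiring_1) = (\<Prod>x\<in>A. of_bool (P x))"
  by (cases "\<forall>x\<in>A. P x") (auto intro!: prod_zero)

lemma carry_span_occurs_at_rotation_coding:
  assumes "0 < \<phi>" "\<phi> < 1" "finite (dom q)"
  shows "carry_span \<phi> (\<lambda>t. of_bool (occurs_at (rotation_coding \<phi> t) q 0))"
proof -
  have factor: "carry_span \<phi> (\<lambda>t. of_bool (q i = Some (\<phi> \<le> frac (t + of_int i * \<phi>))))"
    if "i \<in> dom q" for i
  proof -
    from that obtain b where b: "q i = Some b" by auto
    have "carry_span \<phi> (\<lambda>t. (if b then 0 else 1) + (if b then 1 else -1) * carry \<phi> (-1) (t + of_int i * \<phi>))"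
      by (intro carry_span.add carry_span.const carry_span_scale carry_span_carry_translate)
    then show ?thesis
      using b by (cases b) (simp_all add: carry_minus_one[OF assms(1,2)] of_bool_not_iff)
  qed
  have "carry_span \<phi> (\<lambda>t. \<Prod>i\<in>dom q. of_bool (q i = Some (\<phi> \<le> frac (t + of_int i * \<phi>))))"
    using assms(3) factor by (rule carry_span_prod)
  then show ?thesis
    by (simp add: occurs_at_def rotation_coding_def of_bool_Ball_eq_prod[OF assms(3)])
qed

text \<open>For the second kind of Sturmian word (coding by \<open>(0, \<phi>]\<close>) the starting point is moved
  slightly backwards, which changes nothing on the finite set \<open>S\<close> except at the orbit points
  hitting \<open>0\<close>, where the coding switches to the convention \<open>[0, \<phi>)\<close>.\<close>
lemma sturmian_agrees_with_rotation_coding: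
  assumes st: "sturmian \<phi> X" and \<phi>: "0 < \<phi>" "\<phi> < 1" and S: "finite S"
  obtains x where "\<And>n. n \<in> S \<Longrightarrow> X n = rotation_coding \<phi> x n"
proof -
  obtain x where
    "(\<forall>n. \<not> X n \<longleftrightarrow> frac (x + of_int n * \<phi>) \<in> {0..<\<phi>}) \<or>
     (\<forall>n. \<not> X n \<longleftrightarrow> frac (x + of_int n * \<phi>) \<in> {0<..\<phi>})"
    using st by (auto simp: sturmian_def)
  then consider
      (closed_open) "\<And>n. \<not> X n \<longleftrightarrow> frac (x + of_int n * \<phi>) \<in> {0..<\<phi>}"
    | (open_closed) "\<And>n. \<not> X n \<longleftrightarrow> frac (x + of_int n * \<phi>) \<in> {0<..\<phi>}"
    by blast
  then show thesis
  proof cases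
    case closed_open
    have "X n = rotation_coding \<phi> x n" for n
      using closed_open[of n] by (auto simp: rotation_coding_def)
    then show thesis by (rule that)
  next
    case open_closed
    define y where "y n = frac (x + of_int n * \<phi>)" for n
    define M where "M = {1 - \<phi>} \<union> {y n | n. n \<in> S \<and> 0 < y n} \<union> {y n - \<phi> | n. n \<in> S \<and> \<phi> < y n}"
    define \<epsilon> where "\<epsilon> = Min M / 2"
    have "finite M" "M \<noteq> {}" "\<forall>v\<in>M. 0 < v"
      using S \<phi> by (auto simp: M_def)
    then have \<epsilon>: "0 < \<epsilon>" "\<And>v. v \<in> M \<Longrightarrow> \<epsilon> < v"
      using Min_in[of M] Min_le[of M] by (fastforce simp: \<epsilon>_def)+
    have "X n = rotation_coding \<phi> (x - \<epsilon>) n" if n: "n \<in> S" for n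
    proof -
      have y: "0 \<le> y n" "y n < 1"
        by (auto simp: y_def frac_lt_1)
      have "x - \<epsilon> + of_int n * \<phi> = (y n - \<epsilon>) + of_int \<lfloor>x + of_int n * \<phi>\<rfloor>"
        by (simp add: y_def frac_def)
      then have frac_shift: "frac (x - \<epsilon> + of_int n * \<phi>) = frac (y n - \<epsilon>)"
        by (metis frac_add_of_int_right)
      show ?thesis
      proof (cases "y n = 0")
        case True
        have "\<epsilon> < 1 - \<phi>"
          using \<epsilon>(2) by (simp add: M_def)
        then have "frac (y n - \<epsilon>) = 1 - \<epsilon>"
          using True \<epsilon>(1) \<phi> by (simp add: frac_neg) (auto simp: frac_eq elim!: Ints_cases)
        moreover have "X n"
          using open_closed[of n] True by (simp add: y_def)
        ultimately show ?thesis
          using frac_shift \<open>\<epsilon> < 1 - \<phi>\<close> by (simp add: rotation_coding_def)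
      next
        case False
        then have "y n \<in> M"
          using y n by (auto simp: M_def)
        then have "frac (y n - \<epsilon>) = y n - \<epsilon>"
          using \<epsilon> y by (simp add: frac_eq less_imp_le)
        moreover have "X n \<longleftrightarrow> \<phi> < y n"
          using open_closed[of n] False y by (auto simp: y_def)
        moreover have "\<phi> < y n \<Longrightarrow> \<epsilon> < y n - \<phi>"
          using \<epsilon>(2) n by (auto simp: M_def)
        ultimately show ?thesis
          using frac_shift \<epsilon>(1) by (auto simp: rotation_coding_def)
      qed
    qed
    then show thesis by (rule that)
  qed
qed

lemma rotation_coding_occurrence_discrepancy:
  assumes \<phi>: "0 < \<phi>" "\<phi> < 1" and q: "q \<in> patterns"
  shows "\<exists>F K. \<forall>Y x a L. (\<forall>n\<in>{a..<a + int L}. Y n = rotation_coding \<phi> x n) \<longrightarrow>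
           \<bar>(\<Sum>n<L. of_bool (occurs_at Y q (a + int n))) - real L * F\<bar> \<le> K"
proof -
  define f where "f t = (of_bool (occurs_at (rotation_coding \<phi> t) q 0) :: real)" for t
  obtain F K where FK: "\<And>t L. \<bar>(\<Sum>n<L. f (t + real n * \<phi>)) - real L * F\<bar> \<le> K"
    using carry_span_bounded_remainder[OF carry_span_occurs_at_rotation_coding[OF \<phi> patternsD(1)[OF q]]]
    by (auto simp: f_def)
  define d where "d = nat (Max (dom q))"
  have "\<bar>(\<Sum>n<L. of_bool (occurs_at Y q (a + int n))) - real L * F\<bar> \<le> K + real d"
    if agree: "\<forall>n\<in>{a..<a + int L}. Y n = rotation_coding \<phi> x n" for Y x a L
  proof -
    define g where "g n = (of_bool (occurs_at Y q (a + int n)) :: real)" for n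
    define h where "h n = f (x + of_int a * \<phi> + real n * \<phi>)" for n
    define L' where "L' = L - d"
    \<comment> \<open>only the occurrences starting in the last \<open>d\<close> sites of the window may see outside it\<close>
    have "g n = h n" if "n < L'" for n
    proof -
      have "occurs_at Y q (a + int n) \<longleftrightarrow> occurs_at (rotation_coding \<phi> x) q (a + int n)"
        using that agree patternsD(3)[OF q] by (intro occurs_at_cong[OF q]) (auto simp: L'_def d_def)
      then show ?thesis
        by (simp add: g_def h_def f_def occurs_at_rotation_coding[of \<phi> x] algebra_simps)
    qed
    then have head: "(\<Sum>n<L'. g n) = (\<Sum>n<L'. h n)"
      by simp
    have tail: "\<bar>(\<Sum>n<L - L'. g (L' + n)) - (\<Sum>n<L - L'. h (L' + n))\<bar> \<le> real d"
    proof -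
      have "(\<Sum>n<L - L'. g (L' + n)) \<in> {0..real (L - L')}" "(\<Sum>n<L - L'. h (L' + n)) \<in> {0..real (L - L')}"
        by (rule sum_lessThan_unit_bounds; simp add: g_def h_def f_def)+
      moreover have "real (L - L') \<le> real d"
        by (simp add: L'_def)
      ultimately show ?thesis
        by (simp only: atLeastAtMost_iff abs_le_iff) linarith
    qed
    have split: "(\<Sum>n<L. u n) = (\<Sum>n<L'. u n) + (\<Sum>n<L - L'. u (L' + n))" for u :: "nat \<Rightarrow> real"
      using sum_lessThan_add_nat[of u L' "L - L'"] by (simp add: L'_def)
    have "\<bar>(\<Sum>n<L. h n) - real L * F\<bar> \<le> K"
      using FK[of "x + of_int a * \<phi>" L] by (simp add: h_def)
    then show ?thesis
      using head tail split[of g] split[of h] by (simp add: g_def)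
  qed
  then show ?thesis
    by blast
qed

lemma rotation_coding_occurrence_discrepancies:
  assumes "0 < \<phi>" "\<phi> < 1" "P \<subseteq> patterns"
  obtains F K where
    "\<And>q Y x a L. q \<in> P \<Longrightarrow> (\<forall>n\<in>{a..<a + int L}. Y n = rotation_coding \<phi> x n) \<Longrightarrow>
       \<bar>(\<Sum>n<L. of_bool (occurs_at Y q (a + int n))) - real L * F q\<bar> \<le> K q"
    "\<And>q. q \<in> P \<Longrightarrow> 0 \<le> K q"
proof -
  have "\<forall>q\<in>P. \<exists>F. \<exists>K. \<forall>Y x a L. (\<forall>n\<in>{a..<a + int L}. Y n = rotation_coding \<phi> x n) \<longrightarrow>
          \<bar>(\<Sum>n<L. of_bool (occurs_at Y q (a + int n))) - real L * F\<bar> \<le> K"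
  proof
    fix q assume "q \<in> P"
    then show "\<exists>F K. \<forall>Y x a L. (\<forall>n\<in>{a..<a + int L}. Y n = rotation_coding \<phi> x n) \<longrightarrow>
          \<bar>(\<Sum>n<L. of_bool (occurs_at Y q (a + int n))) - real L * F\<bar> \<le> K"
      using assms(3) by (intro rotation_coding_occurrence_discrepancy[OF assms(1,2)]) blast
  qed
  from bchoice[OF this] obtain F where "\<forall>q\<in>P. \<exists>K. \<forall>Y x a L. (\<forall>n\<in>{a..<a + int L}. Y n = rotation_coding \<phi> x n) \<longrightarrow>
          \<bar>(\<Sum>n<L. of_bool (occurs_at Y q (a + int n))) - real L * F q\<bar> \<le> K"
    by blast
  from bchoice[OF this] obtain K where K: "\<forall>q\<in>P. \<forall>Y x a L. (\<forall>n\<in>{a..<a + int L}. Y n = rotation_coding \<phi> x n) \<longrightarrow>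
          \<bar>(\<Sum>n<L. of_bool (occurs_at Y q (a + int n))) - real L * F q\<bar> \<le> K q"
    by blast
  show thesis
  proof (rule that)
    show bound: "\<bar>(\<Sum>n<L. of_bool (occurs_at Y q (a + int n))) - real L * F q\<bar> \<le> K q"
      if "q \<in> P" "\<forall>n\<in>{a..<a + int L}. Y n = rotation_coding \<phi> x n" for q Y x a L
      using K that by blast
    show "0 \<le> K q" if "q \<in> P" for q
      using bound[OF that, where Y = "rotation_coding \<phi> 0" and x = 0 and a = 0 and L = 0] by simp
  qed
qed

lemma PS_rotation_block:
  assumes "W \<in> PS \<phi>" "0 < \<phi>" "\<phi> < 1"
  obtains p s x where "0 < p" "\<And>n. W (n + int p) = W n"
    "\<And>n. n \<in> {s..<s + int p} \<Longrightarrow> W n = rotation_coding \<phi> x n"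
proof -
  from assms(1) obtain p s Z j where p: "0 < p" and per: "\<forall>n. W (n + int p) = W n"
    and Z: "sturmian \<phi> Z" and block: "\<forall>i<p. W (s + int i) = Z (j + int i)"
    unfolding PS_def mem_Collect_eq by blast
  obtain x where x: "\<And>n. n \<in> {j..<j + int p} \<Longrightarrow> Z n = rotation_coding \<phi> x n"
    using sturmian_agrees_with_rotation_coding[where S = "{j..<j + int p}", OF Z assms(2,3)] by blast
  have "W n = rotation_coding \<phi> (x + of_int (j - s) * \<phi>) n" if "n \<in> {s..<s + int p}" for n
  proof -
    have "nat (n - s) < p"
      using that by auto
    then have "W n = Z (j + int (nat (n - s)))"
      using that block[rule_format, of "nat (n - s)"] by simp
    also have "\<dots> = rotation_coding \<phi> x (j + int (nat (n - s)))"
      using that by (intro x) auto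
    finally show ?thesis
      using that by (simp add: rotation_coding_def algebra_simps)
  qed
  then show thesis
    using per by (intro that[OF p]) auto
qed

section \<open>Pattern counts and energy densities\<close>

lemma dom_pat_of: "dom (pat_of Y B) = (\<lambda>b. b - Min B) ` B"
  by (force simp: pat_of_def dom_def image_iff split: if_splits)

lemma pat_of_in_patterns:
  assumes "finite B" "B \<noteq> {}"
  shows "pat_of Y B \<in> patterns"
proof -
  have "Min ((\<lambda>b. b - Min B) ` B) = Min B - Min B"
    using assms by (simp add: mono_Min_commute[symmetric] mono_def)
  then show ?thesis
    unfolding patterns_def mem_Collect_eq dom_pat_of using assms by simp
qed

lemma pat_of_eqD:
  assumes "pat_of Y B = q" "i \<in> dom q"
  shows "q i = Some (Y (i + Min B))"
  using assms by (auto simp: pat_of_def split: if_splits)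

lemma Min_translate:
  fixes t :: int
  shows "finite B \<Longrightarrow> B \<noteq> {} \<Longrightarrow> Min ((\<lambda>i. i + t) ` B) = Min B + t"
  by (simp add: mono_Min_commute[symmetric] mono_def)

lemma pat_of_translate_eq_iff:
  assumes q: "q \<in> patterns"
  shows "pat_of Y ((\<lambda>i. i + s) ` dom q) = q \<longleftrightarrow> occurs_at Y q s"
proof -
  have Min_eq: "Min ((\<lambda>i. i + s) ` dom q) = s"
    using q by (simp add: Min_translate patterns_def)
  have mem: "i + s \<in> (\<lambda>i. i + s) ` dom q \<longleftrightarrow> i \<in> dom q" for i
    by auto
  have pat_eq: "pat_of Y ((\<lambda>i. i + s) ` dom q) = (\<lambda>i. if i \<in> dom q then Some (Y (i + s)) else None)"
    unfolding pat_of_def Min_eq mem ..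
  show ?thesis
    unfolding pat_eq
  proof
    assume eq: "(\<lambda>i. if i \<in> dom q then Some (Y (i + s)) else None) = q"
    show "occurs_at Y q s"
      unfolding occurs_at_def
    proof
      fix i assume "i \<in> dom q"
      then show "q i = Some (Y (s + i))"
        using fun_cong[OF eq, of i] by (simp add: add.commute)
    qed
  next
    assume "occurs_at Y q s"
    then show "(\<lambda>i. if i \<in> dom q then Some (Y (i + s)) else None) = q"
      by (auto simp: occurs_at_def fun_eq_iff domIff add.commute)
  qed
qed

definition pattern_count :: "config \<Rightarrow> pattern \<Rightarrow> int \<Rightarrow> int \<Rightarrow> nat" where
  "pattern_count Y q a b = card {B \<in> Pow {a..b} - {{}}. pat_of Y B = q}"

lemma pattern_count_eq_sum_occurs_at:
  assumes q: "q \<in> patterns"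
  shows "real (pattern_count Y q a b) =
           (\<Sum>n<nat (b - a + 1 - Max (dom q)). of_bool (occurs_at Y q (a + int n)))"
proof -
  let ?d = "Max (dom q)" and ?N = "nat (b - a + 1 - Max (dom q))"
  define tr where "tr s = (\<lambda>i. i + s) ` dom q" for s
  have q0: "finite (dom q)" "dom q \<noteq> {}" "0 \<in> dom q"
    using patternsD[OF q] by auto
  then have "?d \<in> dom q"
    using Max_in by blast
  have tr_sub: "tr s \<subseteq> {a..b} \<longleftrightarrow> a \<le> s \<and> s \<le> b - ?d" for s
  proof
    assume "tr s \<subseteq> {a..b}"
    moreover have "s \<in> tr s" "?d + s \<in> tr s"
      using q0(3) \<open>?d \<in> dom q\<close> by (auto simp: tr_def)
    ultimately show "a \<le> s \<and> s \<le> b - ?d"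
      by auto
  next
    assume "a \<le> s \<and> s \<le> b - ?d"
    then show "tr s \<subseteq> {a..b}"
      using patternsD(3)[OF q] by (force simp: tr_def)
  qed
  have "inj tr"
  proof (rule injI)
    fix s s' assume "tr s = tr s'"
    then have "Min (tr s) = Min (tr s')"
      by simp
    then show "s = s'"
      using Min_translate[OF q0(1,2)] by (simp add: tr_def)
  qed
  have "{B \<in> Pow {a..b} - {{}}. pat_of Y B = q} = tr ` {s \<in> {a..b - ?d}. occurs_at Y q s}"
  proof (intro equalityI subsetI)
    fix B assume B: "B \<in> {B \<in> Pow {a..b} - {{}}. pat_of Y B = q}"
    then have "tr (Min B) = B"
      using dom_pat_of[of Y B] by (auto simp: tr_def image_image)
    then show "B \<in> tr ` {s \<in> {a..b - ?d}. occurs_at Y q s}"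
      using B tr_sub[of "Min B"] pat_of_translate_eq_iff[OF q, of Y "Min B"]
      by (intro image_eqI[of _ _ "Min B"]) (auto simp: tr_def)
  next
    fix B assume "B \<in> tr ` {s \<in> {a..b - ?d}. occurs_at Y q s}"
    then obtain s where "B = tr s" "a \<le> s" "s \<le> b - ?d" "occurs_at Y q s"
      by auto
    then show "B \<in> {B \<in> Pow {a..b} - {{}}. pat_of Y B = q}"
      using tr_sub[of s] pat_of_translate_eq_iff[OF q, of Y s] q0(2) by (auto simp: tr_def)
  qed
  then have "pattern_count Y q a b = card {s \<in> {a..b - ?d}. occurs_at Y q s}"
    unfolding pattern_count_def using \<open>inj tr\<close> by (simp add: card_image inj_on_subset)
  also have "{s \<in> {a..b - ?d}. occurs_at Y q s} = (\<lambda>n. a + int n) ` {n \<in> {..<?N}. occurs_at Y q (a + int n)}"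
  proof (intro equalityI subsetI)
    fix s assume "s \<in> {s \<in> {a..b - ?d}. occurs_at Y q s}"
    then show "s \<in> (\<lambda>n. a + int n) ` {n \<in> {..<?N}. occurs_at Y q (a + int n)}"
      by (intro image_eqI[of _ _ "nat (s - a)"]) auto
  qed auto
  also have "card \<dots> = card {n \<in> {..<?N}. occurs_at Y q (a + int n)}"
    by (rule card_image) (simp add: inj_on_def)
  finally show ?thesis
    by (simp add: Int_def)
qed

lemma ham_perturbation:
  assumes P: "finite P" "P \<subseteq> patterns" and pert: "perturbation lam P \<Phi> \<Phi>'"
  shows "ham \<Phi>' Y a b = ham \<Phi> Y a b + (\<Sum>q\<in>P. (\<Phi>' q - \<Phi> q) * real (pattern_count Y q a b))"
proof -
  let ?S = "Pow {a..b} - {{}}"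
  have pointwise: "\<Phi>' (pat_of Y B) = \<Phi> (pat_of Y B) + (\<Sum>q\<in>P. (\<Phi>' q - \<Phi> q) * of_bool (pat_of Y B = q))"
    if "B \<in> ?S" for B
  proof (cases "pat_of Y B \<in> P")
    case True
    then show ?thesis
      using P(1) by (simp add: eq_commute[of "pat_of Y B"])
  next
    case False
    moreover have "pat_of Y B \<in> patterns"
      using that finite_subset by (intro pat_of_in_patterns) auto
    ultimately show ?thesis
      using pert by (auto simp: perturbation_def intro!: sum.neutral)
  qed
  have "ham \<Phi>' Y a b = ham \<Phi> Y a b + (\<Sum>B\<in>?S. \<Sum>q\<in>P. (\<Phi>' q - \<Phi> q) * of_bool (pat_of Y B = q))"
    unfolding ham_def sum.distrib[symmetric] by (rule sum.cong[OF refl pointwise])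
  also have "(\<Sum>B\<in>?S. \<Sum>q\<in>P. (\<Phi>' q - \<Phi> q) * of_bool (pat_of Y B = q))
               = (\<Sum>q\<in>P. \<Sum>B\<in>?S. (\<Phi>' q - \<Phi> q) * of_bool (pat_of Y B = q))"
    by (rule sum.swap)
  also have "\<dots> = (\<Sum>q\<in>P. (\<Phi>' q - \<Phi> q) * real (pattern_count Y q a b))"
    by (rule sum.cong[OF refl]) (simp add: pattern_count_def Int_def flip: sum_distrib_left)
  finally show ?thesis .
qed

lemma pattern_count_symmetric_window:
  assumes q: "q \<in> patterns"
    and freq: "\<And>L. \<bar>(\<Sum>n<L. of_bool (occurs_at Y q (- int k + int n))) - real L * F\<bar> \<le> K"
  shows "\<bar>real (pattern_count Y q (- int k) (int k)) - (2 * real k + 1) * F\<bar>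
           \<le> K + of_int (Max (dom q)) * \<bar>F\<bar>"
proof -
  define L where "L = nat (2 * int k + 1 - Max (dom q))"
  have "0 \<le> Max (dom q)"
    using patternsD(2,3)[OF q] by blast
  then have "\<bar>real L - (2 * real k + 1)\<bar> \<le> of_int (Max (dom q))"
    by (auto simp: L_def)
  then have "\<bar>real L * F - (2 * real k + 1) * F\<bar> \<le> of_int (Max (dom q)) * \<bar>F\<bar>"
    by (simp add: left_diff_distrib[symmetric] abs_mult mult_right_mono)
  moreover have "real (pattern_count Y q (- int k) (int k)) = (\<Sum>n<L. of_bool (occurs_at Y q (- int k + int n)))"
    using pattern_count_eq_sum_occurs_at[OF q] by (simp add: L_def)
  ultimately show ?thesis
    using freq[of L] by linarith
qed

lemma sum_weighted_deviation:
  fixes w a b e :: "'q \<Rightarrow> real"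
  assumes "\<And>q. q \<in> P \<Longrightarrow> \<bar>a q - b q\<bar> \<le> e q"
  shows "\<bar>(\<Sum>q\<in>P. w q * a q) - (\<Sum>q\<in>P. w q * b q)\<bar> \<le> (\<Sum>q\<in>P. \<bar>w q\<bar> * e q)"
proof -
  have "\<bar>(\<Sum>q\<in>P. w q * a q) - (\<Sum>q\<in>P. w q * b q)\<bar> = \<bar>\<Sum>q\<in>P. w q * (a q - b q)\<bar>"
    by (simp add: sum_subtractf right_diff_distrib)
  also have "\<dots> \<le> (\<Sum>q\<in>P. \<bar>w q\<bar> * e q)"
    using assms by (intro order_trans[OF sum_abs] sum_mono) (simp add: abs_mult mult_left_mono)
  finally show ?thesis .
qed

lemma tendsto_divide_odd: "(\<lambda>k::nat. C / (2 * real k + 1)) \<longlonglongrightarrow> 0"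
proof (rule tendsto_divide_0[OF tendsto_const])
  have "filterlim (\<lambda>k::nat. 2 * real k + 1) at_top sequentially"
    by (rule filterlim_at_top_mono[OF filterlim_real_sequentially]) auto
  then show "filterlim (\<lambda>k::nat. 2 * real k + 1) at_infinity sequentially"
    by (rule filterlim_at_top_imp_at_infinity)
qed

lemma density_le_if_ham_le:
  assumes "\<And>k. ham \<Phi> Y (- int k) (int k) \<le> (2 * real k + 1) * A + C"
  shows "density \<Phi> Y \<le> ereal A"
proof -
  have "ham \<Phi> Y (- int k) (int k) / (2 * real k + 1) \<le> A + C / (2 * real k + 1)" for k
  proof -
    have "ham \<Phi> Y (- int k) (int k) / (2 * real k + 1) \<le> ((2 * real k + 1) * A + C) / (2 * real k + 1)"
      using assms[of k] by (rule divide_right_mono) simp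
    also have "\<dots> = A + C / (2 * real k + 1)"
      by (simp add: field_simps add_pos_nonneg)
    finally show ?thesis .
  qed
  then have "density \<Phi> Y \<le> liminf (\<lambda>k. ereal (A + C / (2 * real k + 1)))"
    unfolding density_def by (intro Liminf_mono) auto
  also have "\<dots> = ereal A"
    using tendsto_add[OF tendsto_const[of A] tendsto_divide_odd[of C]]
    by (intro lim_imp_Liminf) simp_all
  finally show ?thesis .
qed

lemma density_ge_if_ham_ge:
  assumes "\<And>k. (2 * real k + 1) * A - C \<le> ham \<Phi> Y (- int k) (int k)"
  shows "ereal A \<le> density \<Phi> Y"
proof -
  have "A - C / (2 * real k + 1) \<le> ham \<Phi> Y (- int k) (int k) / (2 * real k + 1)" for k
  proof -
    have "A - C / (2 * real k + 1) = ((2 * real k + 1) * A - C) / (2 * real k + 1)"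
      by (simp add: field_simps add_pos_nonneg)
    also have "\<dots> \<le> ham \<Phi> Y (- int k) (int k) / (2 * real k + 1)"
      using assms[of k] by (rule divide_right_mono) simp
    finally show ?thesis .
  qed
  then have "liminf (\<lambda>k. ereal (A - C / (2 * real k + 1))) \<le> density \<Phi> Y"
    unfolding density_def by (intro Liminf_mono) auto
  moreover have "liminf (\<lambda>k. ereal (A - C / (2 * real k + 1))) = ereal A"
    using tendsto_diff[OF tendsto_const[of A] tendsto_divide_odd[of C]]
    by (intro lim_imp_Liminf) simp_all
  ultimately show ?thesis
    by simp
qed

lemma density_perturbation_le:
  assumes P: "finite P" "P \<subseteq> patterns" and pert: "perturbation lam P \<Phi> \<Phi>'"
    and ground: "\<And>a b. ham \<Phi> X a b = 0"
    and freq: "\<And>q a L. q \<in> P \<Longrightarrow>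
                 \<bar>(\<Sum>n<L. of_bool (occurs_at X q (a + int n))) - real L * F q\<bar> \<le> K q"
  shows "density \<Phi>' X \<le> ereal (\<Sum>q\<in>P. (\<Phi>' q - \<Phi> q) * F q)"
proof (rule density_le_if_ham_le)
  fix k
  define T where "T = 2 * real k + 1"
  define C where "C = (\<Sum>q\<in>P. \<bar>\<Phi>' q - \<Phi> q\<bar> * (K q + of_int (Max (dom q)) * \<bar>F q\<bar>))"
  have "\<bar>real (pattern_count X q (- int k) (int k)) - T * F q\<bar> \<le> K q + of_int (Max (dom q)) * \<bar>F q\<bar>"
    if "q \<in> P" for q
    unfolding T_def using P(2) that freq[OF that, of "- int k"] by (intro pattern_count_symmetric_window) auto
  then have "\<bar>(\<Sum>q\<in>P. (\<Phi>' q - \<Phi> q) * real (pattern_count X q (- int k) (int k)))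
          - (\<Sum>q\<in>P. (\<Phi>' q - \<Phi> q) * (T * F q))\<bar> \<le> C"
    unfolding C_def by (rule sum_weighted_deviation)
  moreover have "(\<Sum>q\<in>P. (\<Phi>' q - \<Phi> q) * (T * F q)) = T * (\<Sum>q\<in>P. (\<Phi>' q - \<Phi> q) * F q)"
    by (simp add: sum_distrib_left algebra_simps)
  moreover have "ham \<Phi>' X (- int k) (int k) = (\<Sum>q\<in>P. (\<Phi>' q - \<Phi> q) * real (pattern_count X q (- int k) (int k)))"
    using ham_perturbation[OF P pert] ground by simp
  ultimately show "ham \<Phi>' X (- int k) (int k) \<le> (2 * real k + 1) * (\<Sum>q\<in>P. (\<Phi>' q - \<Phi> q) * F q) + C"
    unfolding T_def by linarith
qed

lemma periodic_add_mult:
  assumes per: "\<And>n. W (n + int p) = W n"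
  shows "W (n + j * int p) = W n"
proof -
  have nat_mult: "W (m + int i * int p) = W m" for m i
  proof (induction i)
    case (Suc i)
    have "W (m + int (Suc i) * int p) = W ((m + int i * int p) + int p)"
      by (simp add: algebra_simps)
    then show ?case
      using Suc per by simp
  qed simp
  show ?thesis
  proof (cases "0 \<le> j")
    case True
    then show ?thesis
      using nat_mult[of n "nat j"] by simp
  next
    case False
    then show ?thesis
      using nat_mult[of "n + j * int p" "nat (- j)"] by (simp add: algebra_simps)
  qed
qed

lemma periodic_sum_translate:
  fixes g :: "int \<Rightarrow> real"
  assumes per: "\<And>n. g (n + int p) = g n"
  shows "(\<Sum>n<p. g (a + int n)) = (\<Sum>n<p. g (int n))"
proof -
  define S where "S a = (\<Sum>n<p. g (a + int n))" for a
  have step: "S (a + 1) = S a" for a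
  proof -
    have "g a + S (a + 1) = (\<Sum>n<Suc p. g (a + int n))"
      by (subst sum.lessThan_Suc_shift) (simp add: S_def add.assoc)
    also have "\<dots> = S a + g a"
      using per[of a] by (simp add: S_def)
    finally show ?thesis
      by simp
  qed
  have "S a = S 0"
  proof (induction a rule: int_induct[where k = 0])
    case (step2 i)
    then show ?case
      using step[of "i - 1"] by simp
  qed (use step in simp_all)
  then show ?thesis
    by (simp add: S_def)
qed

lemma periodic_sum_discrepancy:
  fixes g :: "int \<Rightarrow> real"
  assumes p: "0 < p" and per: "\<And>n. g (n + int p) = g n" and g: "\<And>n. g n \<in> {0..1}"
  shows "\<bar>(\<Sum>n<L. g (a + int n)) - real L / real p * (\<Sum>n<p. g (b + int n))\<bar> \<le> real p"
proof -
  define S where "S = (\<Sum>n<p. g (int n))"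
  have S: "(\<Sum>n<p. g (c + int n)) = S" for c
    unfolding S_def by (rule periodic_sum_translate[where g = g, OF per])
  have "S \<in> {0..real p}"
    unfolding S_def using g by (intro sum_lessThan_unit_bounds) auto
  have "\<bar>(\<Sum>n<L. g (a + int n)) - real L / real p * S\<bar> \<le> real p" for a
  proof (induction L arbitrary: a rule: less_induct)
    case (less L)
    show ?case
    proof (cases "L < p")
      case True
      have "(\<Sum>n<L. g (a + int n)) \<in> {0..real L}"
        using g by (intro sum_lessThan_unit_bounds) auto
      moreover have "real L / real p * S \<in> {0..real L}"
      proof -
        have "real L / real p * S \<le> real L / real p * real p"
          using \<open>S \<in> {0..real p}\<close> by (intro mult_left_mono) auto
        then show ?thesis
          using \<open>S \<in> {0..real p}\<close> p by auto
      qed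
      ultimately show ?thesis
        using True by (auto simp: abs_le_iff)
    next
      case False
      then obtain L' where L': "L = p + L'"
        using le_Suc_ex not_less by blast
      have "\<bar>(\<Sum>n<L'. g (a + int p + int n)) - real L' / real p * S\<bar> \<le> real p"
        using less[of L' "a + int p"] p L' by simp
      moreover have "(\<Sum>n<L. g (a + int n)) = S + (\<Sum>n<L'. g (a + int p + int n))"
        unfolding L' sum_lessThan_add_nat S by (simp add: add.assoc)
      moreover have "real L / real p * S = S + real L' / real p * S"
        using p by (simp add: L' field_simps)
      ultimately show ?thesis
        by simp
    qed
  qed
  then show ?thesis
    by (simp add: S)
qed

text \<open>The non-empty sets of diameter at most \<open>R\<close> whose least element lies in the period
  \<open>[s, s + p)\<close>; for a \<open>p\<close>-periodic word every long window contains about one translate of each of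
  them per period.\<close>
definition anchored_sets :: "int \<Rightarrow> nat \<Rightarrow> int \<Rightarrow> int set set" where
  "anchored_sets s p R = {B. B \<noteq> {} \<and> B \<subseteq> {s..s + R} \<and> Min B < s + int p}"

definition period_energy :: "(pattern \<Rightarrow> real) \<Rightarrow> config \<Rightarrow> int \<Rightarrow> nat \<Rightarrow> int \<Rightarrow> real" where
  "period_energy \<Phi> W s p R = (\<Sum>B\<in>anchored_sets s p R. \<Phi> (pat_of W B))"

lemma finite_anchored_sets: "finite (anchored_sets s p R)"
  by (rule finite_subset[of _ "Pow {s..s + R}"]) (auto simp: anchored_sets_def)

lemma period_energy_nonneg: "(\<And>q. 0 \<le> \<Phi> q) \<Longrightarrow> 0 \<le> period_energy \<Phi> W s p R"
  by (simp add: period_energy_def sum_nonneg)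

lemma period_energy_ge_sum:
  assumes "\<And>q. 0 \<le> \<Phi> q" "V \<subseteq> anchored_sets s p R"
  shows "(\<Sum>B\<in>V. \<Phi> (pat_of W B)) \<le> period_energy \<Phi> W s p R"
  unfolding period_energy_def using assms finite_anchored_sets by (intro sum_mono2) auto

lemma card_integers_between: "B - A - 1 \<le> real (card {\<lceil>A\<rceil>..\<lfloor>B\<rfloor>})"
proof -
  have "of_int (\<lfloor>B\<rfloor> - \<lceil>A\<rceil> + 1) \<le> real (card {\<lceil>A\<rceil>..\<lfloor>B\<rfloor>})"
    by simp
  then show ?thesis
    using floor_correct[of B] ceiling_correct[of A] by linarith
qed

lemma pat_of_translate_period:
  assumes per: "\<And>n. W (n + int p) = W n" and B: "finite B" "B \<noteq> {}"
  shows "pat_of W ((\<lambda>i. i + j * int p) ` B) = pat_of W B"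
proof
  fix i
  have "i + (Min B + j * int p) \<in> (\<lambda>i. i + j * int p) ` B \<longleftrightarrow> i + Min B \<in> B"
    by force
  moreover have "W (i + (Min B + j * int p)) = W (i + Min B)"
    using periodic_add_mult[where W = W, OF per, of "i + Min B" j] by (simp add: add.assoc)
  ultimately show "pat_of W ((\<lambda>i. i + j * int p) ` B) i = pat_of W B i"
    by (simp add: pat_of_def Min_translate[OF B])
qed

lemma ham_ge_period_energy:
  assumes \<Phi>: "\<And>q. 0 \<le> \<Phi> q" and p: "0 < p" and per: "\<And>n. W (n + int p) = W n"
  shows "((2 * real k - of_int R) / real p - 1) * period_energy \<Phi> W s p R \<le> ham \<Phi> W (- int k) (int k)"
proof -
  let ?V = "anchored_sets s p R"
  define J where "J = {\<lceil>(- real k - of_int s) / real p\<rceil>..\<lfloor>(real k - of_int R - of_int s) / real p\<rfloor>}"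
  define tr where "tr = (\<lambda>(j, B). (\<lambda>i. i + j * int p) ` B)"
  have J: "- int k \<le> s + j * int p \<and> s + j * int p + R \<le> int k" if "j \<in> J" for j
  proof -
    have "- real k - of_int s \<le> of_int j * real p" "of_int j * real p \<le> real k - of_int R - of_int s"
      using that p by (auto simp: J_def ceiling_le_iff le_floor_iff field_simps)
    then have "of_int (- int k - s) \<le> (of_int (j * int p) :: real)"
      "(of_int (j * int p) :: real) \<le> of_int (int k - R - s)"
      by simp_all
    then show ?thesis
      by linarith
  qed
  have V: "B \<noteq> {}" "finite B" "B \<subseteq> {s..s + R}" "s \<le> Min B" "Min B < s + int p" if "B \<in> ?V" for B
    using that finite_subset[of B "{s..s + R}"] Min_in[of B] by (auto simp: anchored_sets_def)
  \<comment> \<open>the least element of a translate determines the translation, as \<open>Min B\<close> lies in one period\<close>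
  have "inj_on tr (J \<times> ?V)"
  proof (rule inj_onI, clarify)
    fix j B j' B' assume jB: "j \<in> J" "B \<in> ?V" "j' \<in> J" "B' \<in> ?V" and eq: "tr (j, B) = tr (j', B')"
    then have "Min B + j * int p = Min B' + j' * int p"
      using Min_translate[OF V(2,1)[OF jB(2)]] Min_translate[OF V(2,1)[OF jB(4)]]
      by (metis tr_def case_prod_conv)
    then have "\<bar>(j - j') * int p\<bar> < int p"
      using V(4,5)[OF jB(2)] V(4,5)[OF jB(4)] by (simp add: algebra_simps abs_less_iff)
    then have "\<bar>j - j'\<bar> * int p < 1 * int p"
      by (simp add: abs_mult)
    then have "j = j'"
      using mult_less_cancel_right[of "\<bar>j - j'\<bar>" "int p" 1] by simp
    moreover from this have "B = B'"
      using eq by (simp add: tr_def inj_image_eq_iff)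
    ultimately show "j = j' \<and> B = B'" ..
  qed
  moreover have "tr ` (J \<times> ?V) \<subseteq> Pow {- int k..int k} - {{}}"
    using J V(1,3) by (fastforce simp: tr_def)
  ultimately have "(\<Sum>x\<in>J \<times> ?V. \<Phi> (pat_of W (tr x))) \<le> ham \<Phi> W (- int k) (int k)"
    unfolding ham_def using \<Phi> by (subst sum.reindex[symmetric, unfolded comp_def]) (auto intro: sum_mono2)
  moreover have "(\<Sum>x\<in>J \<times> ?V. \<Phi> (pat_of W (tr x))) = (\<Sum>j\<in>J. \<Sum>B\<in>?V. \<Phi> (pat_of W (tr (j, B))))"
    by (simp add: sum.cartesian_product)
  moreover have "\<dots> = real (card J) * period_energy \<Phi> W s p R"
    using pat_of_translate_period[where W = W, OF per] V(2,1) by (simp add: tr_def period_energy_def)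
  moreover have "((2 * real k - of_int R) / real p - 1) * period_energy \<Phi> W s p R
                   \<le> real (card J) * period_energy \<Phi> W s p R"
  proof (rule mult_right_mono)
    show "(2 * real k - of_int R) / real p - 1 \<le> real (card J)"
      using card_integers_between[where A = "(- real k - of_int s) / real p" and B = "(real k - of_int R - of_int s) / real p"]
      by (simp add: J_def diff_divide_distrib[symmetric])
    show "0 \<le> period_energy \<Phi> W s p R"
      by (rule period_energy_nonneg[where \<Phi> = \<Phi>, OF \<Phi>])
  qed
  ultimately show ?thesis
    by linarith
qed

lemma abs_diff_le_trans: "\<bar>x - y\<bar> \<le> a \<Longrightarrow> \<bar>y - z\<bar> \<le> b \<Longrightarrow> \<bar>x - z\<bar> \<le> a + b"
  for x y z :: real
  by linarith

lemma occurs_at_periodic: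
  assumes "q \<in> patterns" "\<And>n. W (n + int p) = W n"
  shows "occurs_at W q (s + int p) = occurs_at W q s"
proof (rule occurs_at_cong[OF assms(1)])
  fix i
  show "W (s + int p + i) = W (s + i)"
    using assms(2)[of "s + i"] by (simp add: algebra_simps)
qed

lemma pattern_count_periodic:
  assumes q: "q \<in> patterns" and p: "0 < p" and per: "\<And>n. W (n + int p) = W n"
    and block: "\<bar>(\<Sum>n<p. of_bool (occurs_at W q (s + int n))) - real p * F\<bar> \<le> K"
  shows "\<bar>real (pattern_count W q (- int k) (int k)) - (2 * real k + 1) * F\<bar>
           \<le> real p + of_int (Max (dom q)) + (2 * real k + 1) / real p * K"
proof -
  define g where "g n = (of_bool (occurs_at W q n) :: real)" for n
  define S where "S = (\<Sum>n<p. g (s + int n))"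
  have "S \<in> {0..real p}"
    unfolding S_def g_def by (intro sum_lessThan_unit_bounds) auto
  have "g (n + int p) = g n" for n
    using occurs_at_periodic[where W = W, OF q per] by (simp add: g_def)
  moreover have "g n \<in> {0..1}" for n
    by (simp add: g_def)
  ultimately have "\<bar>(\<Sum>n<L. g (- int k + int n)) - real L * (S / real p)\<bar> \<le> real p" for L
    using periodic_sum_discrepancy[OF p, where g = g and L = L and a = "- int k" and b = s] by (simp add: S_def)
  then have "\<bar>real (pattern_count W q (- int k) (int k)) - (2 * real k + 1) * (S / real p)\<bar>
               \<le> real p + of_int (Max (dom q)) * \<bar>S / real p\<bar>"
    unfolding g_def by (rule pattern_count_symmetric_window[OF q])
  moreover have "of_int (Max (dom q)) * \<bar>S / real p\<bar> \<le> of_int (Max (dom q))"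
    using \<open>S \<in> {0..real p}\<close> p patternsD(2,3)[OF q] by (intro mult_left_le) auto
  ultimately have "\<bar>real (pattern_count W q (- int k) (int k)) - (2 * real k + 1) * (S / real p)\<bar>
                     \<le> real p + of_int (Max (dom q))"
    by linarith
  moreover have "\<bar>(2 * real k + 1) * (S / real p) - (2 * real k + 1) * F\<bar> \<le> (2 * real k + 1) / real p * K"
  proof -
    have "0 \<le> (2 * real k + 1) / real p"
      by simp
    have "(2 * real k + 1) * (S / real p) - (2 * real k + 1) * F = (2 * real k + 1) / real p * (S - real p * F)"
      using p by (simp add: field_simps)
    also have "\<bar>\<dots>\<bar> = (2 * real k + 1) / real p * \<bar>S - real p * F\<bar>"
      by (simp only: abs_mult abs_of_nonneg[OF \<open>0 \<le> (2 * real k + 1) / real p\<close>])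
    also have "\<dots> \<le> (2 * real k + 1) / real p * K"
      using block by (intro mult_left_mono) (simp_all add: S_def g_def)
    finally show ?thesis .
  qed
  ultimately show ?thesis
    by (rule abs_diff_le_trans)
qed

lemma density_perturbation_periodic_ge:
  assumes P: "finite P" "P \<subseteq> patterns" and pert: "perturbation lam P \<Phi> \<Phi>'" and \<Phi>: "\<And>q. 0 \<le> \<Phi> q"
    and p: "0 < p" and per: "\<And>n. W (n + int p) = W n"
    and block: "\<And>q. q \<in> P \<Longrightarrow> \<bar>(\<Sum>n<p. of_bool (occurs_at W q (s + int n))) - real p * F q\<bar> \<le> K q"
    and energy: "lam * (\<Sum>q\<in>P. K q) \<le> period_energy \<Phi> W s p R"
  shows "ereal (\<Sum>q\<in>P. (\<Phi>' q - \<Phi> q) * F q) \<le> density \<Phi>' W"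
proof (rule density_ge_if_ham_ge)
  fix k
  define T where "T = 2 * real k + 1"
  define \<delta> where "\<delta> q = \<Phi>' q - \<Phi> q" for q
  define E where "E = period_energy \<Phi> W s p R"
  define C0 where "C0 = (\<Sum>q\<in>P. \<bar>\<delta> q\<bar> * (real p + of_int (Max (dom q))))"
  have \<delta>: "\<bar>\<delta> q\<bar> \<le> lam" if "q \<in> P" for q
    using pert that by (auto simp: perturbation_def \<delta>_def abs_minus_commute)
  have K: "0 \<le> K q" if "q \<in> P" for q
    using block[OF that] by linarith
  have "\<bar>(\<Sum>q\<in>P. \<delta> q * real (pattern_count W q (- int k) (int k))) - (\<Sum>q\<in>P. \<delta> q * (T * F q))\<bar>
          \<le> (\<Sum>q\<in>P. \<bar>\<delta> q\<bar> * (real p + of_int (Max (dom q)) + T / real p * K q))"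
    using P(2) unfolding T_def
    by (intro sum_weighted_deviation pattern_count_periodic[where W = W, OF _ p per block]) auto
  also have "\<dots> = C0 + T / real p * (\<Sum>q\<in>P. \<bar>\<delta> q\<bar> * K q)"
    by (simp add: C0_def sum.distrib sum_distrib_left algebra_simps)
  also have "\<dots> \<le> C0 + T / real p * E"
  proof -
    have "(\<Sum>q\<in>P. \<bar>\<delta> q\<bar> * K q) \<le> (\<Sum>q\<in>P. lam * K q)"
      using \<delta> K by (intro sum_mono mult_right_mono) auto
    then have "(\<Sum>q\<in>P. \<bar>\<delta> q\<bar> * K q) \<le> E"
      using energy by (simp add: E_def sum_distrib_left)
    then show ?thesis
      by (intro add_left_mono mult_left_mono) (simp_all add: T_def)
  qed
  finally have "T * (\<Sum>q\<in>P. \<delta> q * F q) - C0 - T / real p * E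
                  \<le> (\<Sum>q\<in>P. \<delta> q * real (pattern_count W q (- int k) (int k)))"
    by (simp add: sum_distrib_left algebra_simps)
  moreover have "(T - 1 - of_int R) / real p * E - E \<le> ham \<Phi> W (- int k) (int k)"
    using ham_ge_period_energy[where \<Phi> = \<Phi> and W = W, OF \<Phi> p per, of k R s] by (simp add: T_def E_def left_diff_distrib)
  moreover have "ham \<Phi>' W (- int k) (int k) = ham \<Phi> W (- int k) (int k)
                   + (\<Sum>q\<in>P. \<delta> q * real (pattern_count W q (- int k) (int k)))"
    using ham_perturbation[OF P pert] by (simp add: \<delta>_def)
  moreover have "T / real p * E - (T - 1 - of_int R) / real p * E = (1 + of_int R) / real p * E"
    using p by (simp add: field_simps)
  ultimately show "(2 * real k + 1) * (\<Sum>q\<in>P. (\<Phi>' q - \<Phi> q) * F q) - (C0 + (1 + of_int R) / real p * E + E)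
                     \<le> ham \<Phi>' W (- int k) (int k)"
    unfolding T_def \<delta>_def by linarith
qed

section \<open>The energy of periodic words under \<open>H\<^sub>\<alpha>\<close>\<close>

lemma Phi_alpha_nonneg: "0 \<le> Phi_alpha \<phi> m \<alpha> q"
  by (simp add: Phi_alpha_def)

lemma pair_pat_inj:
  assumes "1 \<le> n" "pair_pat n = pair_pat n'"
  shows "n = n'"
proof -
  have "pair_pat n (int n) = Some True"
    by (simp add: pair_pat_def)
  then have "pair_pat n' (int n) = Some True"
    using assms(2) by simp
  then show ?thesis
    using assms(1) by (auto simp: pair_pat_def split: if_splits)
qed

lemma Phi_alpha_pair_pat:
  assumes n: "n \<in> forbidden \<phi>"
  shows "Phi_alpha \<phi> m \<alpha> (pair_pat n) = 1 / real n powr \<alpha>"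
proof -
  have "1 \<le> n"
    using n by (simp add: forbidden_def)
  moreover have "pair_pat n \<noteq> zeros_pat m"
  proof
    assume "pair_pat n = zeros_pat m"
    then have "pair_pat n 0 = zeros_pat m 0"
      by simp
    then show False
      by (simp add: pair_pat_def zeros_pat_def split: if_splits)
  qed
  moreover have "(THE n'. n' \<in> forbidden \<phi> \<and> pair_pat n = pair_pat n') = n"
    using n pair_pat_inj[OF \<open>1 \<le> n\<close>] by (intro the_equality) auto
  ultimately show ?thesis
    using n by (auto simp: Phi_alpha_def)
qed

lemma pat_of_pair:
  assumes "x < y" "W x" "W y"
  shows "pat_of W {x, y} = pair_pat (nat (y - x))"
proof
  fix i
  have "Min {x, y} = x" "i + x \<in> {x, y} \<longleftrightarrow> i = 0 \<or> i = int (nat (y - x))"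
    using assms(1) by auto
  then show "pat_of W {x, y} i = pair_pat (nat (y - x)) i"
    using assms by (auto simp: pat_of_def pair_pat_def)
qed

lemma pat_of_zeros:
  assumes "1 \<le> m" "\<And>i. 0 \<le> i \<Longrightarrow> i < int m \<Longrightarrow> \<not> W (s + i)"
  shows "pat_of W {s..s + int m - 1} = zeros_pat m"
proof
  fix i
  have "Min {s..s + int m - 1} = s"
    using assms(1) by (intro Min_eqI) auto
  then show "pat_of W {s..s + int m - 1} i = zeros_pat m i"
    using assms(2)[of i] by (auto simp: pat_of_def zeros_pat_def add.commute)
qed

lemma good_m_sturmianD:
  assumes "good_m \<phi> m" "sturmian \<phi> X"
  shows "\<And>n. \<exists>i<m. X (n + int i)"
    and "\<And>a b. a < b \<Longrightarrow> X a \<Longrightarrow> X b \<Longrightarrow> nat (b - a) \<notin> forbidden \<phi>"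
proof -
  have "((\<forall>n. \<not> (\<forall>i. i < m \<longrightarrow> \<not> X (n + int i))) \<and>
          (\<forall>a b. a < b \<and> X a \<and> X b \<longrightarrow> nat (b - a) \<notin> forbidden \<phi>)) \<longleftrightarrow> sturmian \<phi> X"
    using assms(1) unfolding good_m_def by (rule spec)
  then show "\<And>n. \<exists>i<m. X (n + int i)"
    and "\<And>a b. a < b \<Longrightarrow> X a \<Longrightarrow> X b \<Longrightarrow> nat (b - a) \<notin> forbidden \<phi>"
    using assms(2) by blast+
qed

lemma good_m_pos: "good_m \<phi> m \<Longrightarrow> sturmian \<phi> X \<Longrightarrow> 1 \<le> m"
  using good_m_sturmianD(1)[of \<phi> m X 0] by auto

lemma ham_Phi_alpha_sturmian:
  assumes "good_m \<phi> m" "sturmian \<phi> X"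
  shows "ham (Phi_alpha \<phi> m \<alpha>) X a b = 0"
proof -
  have "Phi_alpha \<phi> m \<alpha> (pat_of X B) = 0" for B
  proof -
    have "pat_of X B \<noteq> zeros_pat m"
    proof
      assume zeros: "pat_of X B = zeros_pat m"
      obtain i where "i < m" "X (Min B + int i)"
        using good_m_sturmianD(1)[OF assms] by blast
      then show False
        using pat_of_eqD[OF zeros, of "int i"] by (simp add: zeros_pat_def domIff add.commute)
    qed
    moreover have "pat_of X B \<noteq> pair_pat n" if "n \<in> forbidden \<phi>" for n
    proof
      assume pair: "pat_of X B = pair_pat n"
      have "1 \<le> n"
        using that by (simp add: forbidden_def)
      then have "X (Min B)" "X (int n + Min B)"
        using pat_of_eqD[OF pair, of 0] pat_of_eqD[OF pair, of "int n"] by (simp_all add: pair_pat_def domIff)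
      then show False
        using good_m_sturmianD(2)[OF assms, of "Min B" "int n + Min B"] that \<open>1 \<le> n\<close> by simp
    qed
    ultimately show ?thesis
      by (auto simp: Phi_alpha_def)
  qed
  then show ?thesis
    by (simp add: ham_def)
qed

lemma badly_approximable_gap:
  assumes badly: "\<forall>a b::int. 0 < b \<longrightarrow> c / (of_int b)\<^sup>2 < \<bar>\<phi> - of_int a / of_int b\<bar>"
    and p: "0 < p"
  shows "c / real p < \<bar>real p * \<phi> - of_int a\<bar>"
proof -
  have "c / (real p)\<^sup>2 < \<bar>\<phi> - of_int a / real p\<bar>"
    using badly[rule_format, of "int p" a] p by simp
  then have "real p * (c / (real p)\<^sup>2) < real p * \<bar>\<phi> - of_int a / real p\<bar>"
    using p by (intro mult_strict_left_mono) auto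
  moreover have "real p * \<bar>\<phi> - of_int a / real p\<bar> = \<bar>real p * \<phi> - of_int a\<bar>"
    using p by (simp add: abs_mult[symmetric] field_simps)
  ultimately show ?thesis
    using p by (simp add: power2_eq_square)
qed

lemma rational_rotation_hits:
  fixes h k j :: int and y :: real
  assumes "coprime h k" "0 < k"
  obtains i where "0 \<le> i" "i < k" "frac (y + of_int (i * h) / of_int k) = frac (y + of_int j / of_int k)"
proof -
  obtain u v where "u * h + v * k = 1"
    using bezout_int[of h k] assms(1) by (auto simp: coprime_iff_gcd_eq_1)
  define i where "i = (j * u) mod k"
  define t where "t = - j * v - (j * u div k) * h"
  have "i = j * u - k * (j * u div k)"
    by (simp add: i_def minus_div_mult_eq_mod[symmetric] mult.commute)
  then have "i * h = j + k * t"
    using \<open>u * h + v * k = 1\<close> unfolding t_def by algebra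
  then have "(of_int (i * h) :: real) = of_int j + of_int k * of_int t"
    by simp
  then have "y + of_int (i * h) / of_int k = (y + of_int j / of_int k) + of_int t"
    using assms(2) by (simp add: field_simps)
  then have "frac (y + of_int (i * h) / of_int k) = frac (y + of_int j / of_int k)"
    by (metis frac_add_of_int_right)
  moreover have "0 \<le> i" "i < k"
    using assms(2) by (simp_all add: i_def)
  ultimately show thesis
    using that by blast
qed

text \<open>Dirichlet's theorem gives \<open>h / k\<close> with \<open>k \<le> p\<close> and \<open>|k \<phi> - h| < 1 / p\<close>; the first \<open>k\<close> orbit
  points of the rotation by \<open>h / k\<close> are exactly the points \<open>y + j / k\<close> modulo \<open>1\<close>, and the rotation
  by \<open>\<phi>\<close> stays within \<open>1 / p\<close> of them.  Bad approximability forces \<open>k > c p\<close>.\<close>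
lemma orbit_hits_interval:
  fixes \<phi> c y u len :: real and p :: nat
  assumes badly: "\<forall>a b::int. b > 0 \<longrightarrow> \<bar>\<phi> - of_int a / of_int b\<bar> > c / (of_int b)\<^sup>2"
    and c: "0 < c" and p: "0 < p" and u: "0 \<le> u" "0 \<le> len" "u + len \<le> 1"
  shows "c * real p * len - 3 \<le>
           real (card {i \<in> {..<p}. u < frac (y + real i * \<phi>) \<and> frac (y + real i * \<phi>) < u + len})"
proof -
  obtain h k where hk: "coprime h k" "0 < k" "k \<le> int p" "\<bar>of_int k * \<phi> - of_int h\<bar> < 1 / real p"
    using Dirichlet_approx_coprime[OF p, of \<phi>] by blast
  have "c / of_int k < 1 / real p"
    using badly_approximable_gap[OF badly, of "nat k" h] hk(2,4) by simp
  then have ckp: "c * real p < of_int k"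
    using hk(2) p by (simp add: field_simps)
  have pinv: "0 < 1 / real p"
    using p by simp
  define v where "v j = y + of_int j / of_int k" for j
  define J where "J = {\<lceil>of_int k * (u + 1 / real p - y)\<rceil>..\<lfloor>of_int k * (u + len - 1 / real p - y)\<rfloor>}"
  define T where "T = {i \<in> {..<p}. u < frac (y + real i * \<phi>) \<and> frac (y + real i * \<phi>) < u + len}"
  have vJ: "u + 1 / real p \<le> v j \<and> v j \<le> u + len - 1 / real p" if "j \<in> J" for j
  proof -
    have "of_int k * (u + 1 / real p - y) \<le> of_int j" "of_int j \<le> of_int k * (u + len - 1 / real p - y)"
      using that by (auto simp: J_def ceiling_le_iff le_floor_iff)
    then show ?thesis
      using hk(2) by (auto simp: v_def field_simps)
  qed
  have "\<forall>j\<in>J. \<exists>i. i < nat k \<and> frac (y + of_int (int i * h) / of_int k) = v j"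
  proof
    fix j assume "j \<in> J"
    obtain i where "0 \<le> i" "i < k" "frac (y + of_int (i * h) / of_int k) = frac (v j)"
      using rational_rotation_hits[OF hk(1,2)] by (metis v_def)
    moreover have "v j \<in> {0..<1}"
      using vJ[OF \<open>j \<in> J\<close>] u pinv unfolding atLeastLessThan_iff by linarith
    then have "frac (v j) = v j"
      by (rule frac_eq_id)
    ultimately show "\<exists>i. i < nat k \<and> frac (y + of_int (int i * h) / of_int k) = v j"
      by (intro exI[of _ "nat i"]) auto
  qed
  then obtain f where f: "\<And>j. j \<in> J \<Longrightarrow> f j < nat k \<and> frac (y + of_int (int (f j) * h) / of_int k) = v j"
    by metis
  have "inj_on f J"
  proof (rule inj_onI)
    fix j j' assume "j \<in> J" "j' \<in> J" "f j = f j'"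
    then have "v j = v j'"
      using f by metis
    then show "j = j'"
      using hk(2) by (simp add: v_def)
  qed
  moreover have "f ` J \<subseteq> T"
  proof
    fix i assume "i \<in> f ` J"
    then obtain j where j: "j \<in> J" "i = f j"
      by blast
    then have i: "i < nat k" and fr: "frac (y + of_int (int i * h) / of_int k) = v j"
      using f by auto
    define \<delta> where "\<delta> = real i * \<phi> - of_int (int i * h) / of_int k"
    have "\<delta> = real i / of_int k * (of_int k * \<phi> - of_int h)"
      using hk(2) by (simp add: \<delta>_def field_simps)
    then have "\<bar>\<delta>\<bar> = real i / of_int k * \<bar>of_int k * \<phi> - of_int h\<bar>"
      using hk(2) by (simp add: abs_mult)
    also have "\<dots> \<le> \<bar>of_int k * \<phi> - of_int h\<bar>"
      using i hk(2) by (intro mult_left_le_one_le) (simp_all add: field_simps)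
    finally have \<delta>_small: "\<bar>\<delta>\<bar> < 1 / real p"
      using hk(4) by linarith
    have "y + real i * \<phi> = (frac (y + of_int (int i * h) / of_int k) + \<delta>) + of_int \<lfloor>y + of_int (int i * h) / of_int k\<rfloor>"
      by (simp add: \<delta>_def frac_def)
    then have "frac (y + real i * \<phi>) = frac (v j + \<delta>)"
      by (metis fr frac_add_of_int_right)
    also have "\<dots> = v j + \<delta>"
      using vJ[OF j(1)] \<delta>_small u unfolding abs_less_iff by (intro frac_eq_id) simp
    finally show "i \<in> T"
      using vJ[OF j(1)] \<delta>_small i hk(3) by (auto simp: T_def abs_less_iff)
  qed
  ultimately have "card J \<le> card T"
    by (intro card_inj_on_le) (auto simp: T_def)
  moreover have "of_int k * len - 2 * of_int k / real p - 1 \<le> real (card J)"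
    using card_integers_between[where A = "of_int k * (u + 1 / real p - y)" and B = "of_int k * (u + len - 1 / real p - y)"]
    by (simp add: J_def algebra_simps)
  moreover have "2 * of_int k / real p \<le> 2"
    using hk(3) p by (simp add: field_simps)
  moreover have "c * real p * len \<le> of_int k * len"
    using ckp u(2) by (simp add: mult_right_mono)
  ultimately show ?thesis
    unfolding T_def by linarith
qed

lemma forbidden_pair_in_block:
  fixes y :: real and r z :: int and k a b :: nat
  assumes \<phi>: "0 < \<phi>" "\<phi> < 1" and per: "\<And>n. W (n + int p) = W n"
    and blk: "\<And>i. i < p \<Longrightarrow> W (s + int i) = (\<phi> \<le> frac (y + real i * \<phi>))"
    and k: "1 \<le> k" and ab: "a < p" "b < p"
    and ones: "\<phi> \<le> frac (y + real a * \<phi>)" "\<phi> \<le> frac (y + real b * \<phi>)"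
    and v: "frac (y + real b * \<phi>) - frac (y + real a * \<phi>) + real k * (real p * \<phi> - of_int r) + of_int z
              \<in> {1 - \<phi>..\<phi>}"
  shows "Phi_alpha \<phi> m \<alpha> (pat_of W {s + int a, s + int (k * p + b)}) = 1 / real (k * p + b - a) powr \<alpha>"
proof -
  define n where "n = k * p + b - a"
  define v where "v = frac (y + real b * \<phi>) - frac (y + real a * \<phi>) + real k * (real p * \<phi> - of_int r) + of_int z"
  have "p \<le> k * p"
    using k by simp
  then have "a < k * p + b"
    using ab by linarith
  then have n1: "1 \<le> n" and n_real: "real n = real k * real p + real b - real a"
    and n_int: "int n = int k * int p + int b - int a"
    by (simp_all add: n_def)
  have "real n * \<phi> = v + of_int (int k * r + \<lfloor>y + real b * \<phi>\<rfloor> - \<lfloor>y + real a * \<phi>\<rfloor> - z)"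
    unfolding n_real v_def frac_def by (simp add: algebra_simps)
  then have "frac (real n * \<phi>) = frac v"
    by (metis frac_add_of_int_right)
  also have "\<dots> = v"
    using v \<phi> by (intro frac_eq_id) (auto simp: v_def)
  finally have "n \<in> forbidden \<phi>"
    using n1 v by (simp add: forbidden_def v_def)
  have "W (s + int (k * p + b)) = W ((s + int b) + int k * int p)"
    by (simp add: algebra_simps)
  then have "W (s + int (k * p + b))"
    using periodic_add_mult[where W = W, OF per] blk[OF ab(2)] ones(2) by simp
  moreover have "W (s + int a)"
    using blk[OF ab(1)] ones(1) by simp
  moreover have "s + int a < s + int (k * p + b)"
    using \<open>a < k * p + b\<close> by (simp only: add_less_cancel_left of_nat_less_iff)
  ultimately have "pat_of W {s + int a, s + int (k * p + b)} = pair_pat n"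
    using pat_of_pair[of "s + int a" "s + int (k * p + b)" W] by (simp add: n_int[symmetric])
  then show ?thesis
    using Phi_alpha_pair_pat[OF \<open>n \<in> forbidden \<phi>\<close>] by (simp add: n_def)
qed

text \<open>Two \<open>1\<close>'s at positions \<open>a\<close> and \<open>k p + b\<close> of the periodic word sit at a forbidden distance
  as soon as the orbit points \<open>t\<^sub>a\<close> and \<open>t\<^sub>b\<close> lie in suitable intervals of length \<open>len\<close> near
  \<open>\<phi>\<close> and near \<open>1\<close>, since \<open>(k p + b - a) \<phi> \<equiv> t\<^sub>b - t\<^sub>a + k \<theta>\<close>; which point goes where depends on the sign
  of \<open>\<theta>\<close>.\<close>
lemma forbidden_pairs_from_hits:
  fixes \<phi> y \<theta> c len :: real and p k :: nat and r :: int
  assumes badly: "\<forall>a b::int. b > 0 \<longrightarrow> \<bar>\<phi> - of_int a / of_int b\<bar> > c / (of_int b)\<^sup>2"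
    and c: "0 < c" and \<phi>: "0 < \<phi>" "\<phi> < 1" and p: "0 < p" and per: "\<And>n. W (n + int p) = W n"
    and blk: "\<And>i. i < p \<Longrightarrow> W (s + int i) = (\<phi> \<le> frac (y + real i * \<phi>))"
    and \<theta>: "\<theta> = real p * \<phi> - of_int r" and k: "1 \<le> k"
    and len: "0 \<le> len" "2 * len \<le> real k * \<bar>\<theta>\<bar>" "real k * \<bar>\<theta>\<bar> \<le> 2 * \<phi> - 1" "len \<le> 1 - \<phi>"
  obtains A B where "A \<subseteq> {..<p}" "B \<subseteq> {..<p}"
    "c * real p * len - 3 \<le> real (card A)" "c * real p * len - 3 \<le> real (card B)"
    "\<And>a b. a \<in> A \<Longrightarrow> b \<in> B \<Longrightarrow>
       Phi_alpha \<phi> m \<alpha> (pat_of W {s + int a, s + int (k * p + b)}) = 1 / real (k * p + b - a) powr \<alpha>"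
proof -
  define t where "t i = frac (y + real i * \<phi>)" for i :: nat
  define near_\<phi> where "near_\<phi> = {i \<in> {..<p}. \<phi> < t i \<and> t i < \<phi> + len}"
  define near_1 where "near_1 = {i \<in> {..<p}. 1 - len < t i \<and> t i < (1 - len) + len}"
  have card: "c * real p * len - 3 \<le> real (card near_\<phi>)" "c * real p * len - 3 \<le> real (card near_1)"
    unfolding near_\<phi>_def near_1_def t_def using \<phi> len by (intro orbit_hits_interval[OF badly c p]; simp)+
  have t1: "t i < 1" for i
    by (simp add: t_def frac_lt_1)
  have pair: "Phi_alpha \<phi> m \<alpha> (pat_of W {s + int a, s + int (k * p + b)}) = 1 / real (k * p + b - a) powr \<alpha>"
    if "a < p" "b < p" "\<phi> \<le> t a" "\<phi> \<le> t b" "t b - t a + real k * \<theta> + of_int z \<in> {1 - \<phi>..\<phi>}" for a b z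
    using forbidden_pair_in_block[OF \<phi> per blk k, where a = a and b = b and r = r and z = z] that
    by (simp add: t_def \<theta>)
  show thesis
  proof (cases "0 < \<theta>")
    case True
    show thesis
    proof (rule that[of near_\<phi> near_1])
      fix a b assume "a \<in> near_\<phi>" "b \<in> near_1"
      then show "Phi_alpha \<phi> m \<alpha> (pat_of W {s + int a, s + int (k * p + b)}) = 1 / real (k * p + b - a) powr \<alpha>"
        using True len t1[of b] by (intro pair[where z = 0]) (auto simp: near_\<phi>_def near_1_def)
    qed (use card in \<open>auto simp: near_\<phi>_def near_1_def\<close>)
  next
    case False
    show thesis
    proof (rule that[of near_1 near_\<phi>])
      fix a b assume "a \<in> near_1" "b \<in> near_\<phi>"
      then show "Phi_alpha \<phi> m \<alpha> (pat_of W {s + int a, s + int (k * p + b)}) = 1 / real (k * p + b - a) powr \<alpha>"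
        using False len t1[of a] by (intro pair[where z = 1]) (auto simp: near_\<phi>_def near_1_def)
    qed (use card in \<open>auto simp: near_\<phi>_def near_1_def\<close>)
  qed
qed

lemma period_energy_ge_pairs:
  fixes \<alpha> :: real and N p :: nat
  assumes Ks: "finite Ks" "\<And>k. k \<in> Ks \<Longrightarrow> 1 \<le> k \<and> (k + 1) * p \<le> N"
    and AB: "\<And>k. k \<in> Ks \<Longrightarrow> A k \<subseteq> {..<p} \<and> B k \<subseteq> {..<p}"
    and pairs: "\<And>k a b. k \<in> Ks \<Longrightarrow> a \<in> A k \<Longrightarrow> b \<in> B k \<Longrightarrow>
                  Phi_alpha \<phi> m \<alpha> (pat_of W {s + int a, s + int (k * p + b)}) = 1 / real (k * p + b - a) powr \<alpha>"
    and \<alpha>: "0 < \<alpha>"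
  shows "(\<Sum>k\<in>Ks. real (card (A k) * card (B k))) / real N powr \<alpha>
           \<le> period_energy (Phi_alpha \<phi> m \<alpha>) W s p (int N)"
proof -
  define S where "S = Sigma Ks (\<lambda>k. A k \<times> B k)"
  define g where "g = (\<lambda>(k, a, b). {s + int a, s + int (k * p + b)})"
  have S: "k \<in> Ks \<and> a < p \<and> b < p \<and> a < k * p + b \<and> k * p + b < N" if "(k, a, b) \<in> S" for k a b
  proof -
    have k: "k \<in> Ks" and a: "a < p" and b: "b < p"
      using that AB by (auto simp: S_def)
    have "p \<le> k * p" "(k + 1) * p \<le> N"
      using Ks(2)[OF k] by simp_all
    then have "a < k * p + b" "k * p + b < N"
      using a b by (linarith, simp add: algebra_simps)
    then show ?thesis
      using k a b by blast
  qed
  have "finite S"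
    unfolding S_def using Ks(1) AB by (intro finite_SigmaI) (auto intro: finite_subset)
  have g: "a < p \<and> Min (g (k, a, b)) = s + int a \<and> Max (g (k, a, b)) = s + int (k * p + b)
             \<and> g (k, a, b) \<in> anchored_sets s p (int N)"
    if "(k, a, b) \<in> S" for k a b
  proof -
    have "a < p" "a < k * p + b" "k * p + b \<le> N"
      using S[OF that] by auto
    then have "a < p" "int a < int (k * p + b)" "int (k * p + b) \<le> int N"
      by (simp_all only: of_nat_less_iff of_nat_le_iff)
    then show ?thesis
      by (auto simp: g_def anchored_sets_def min_def max_def)
  qed
  have "inj_on g S"
  proof (rule inj_onI)
    fix x x' assume "x \<in> S" "x' \<in> S" and e: "g x = g x'"
    obtain k a b k' a' b' where x: "x = (k, a, b)" and x': "x' = (k', a', b')"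
      by (cases x, cases x') auto
    have "s + int a = s + int a'" "s + int (k * p + b) = s + int (k' * p + b')"
      using g[of k a b] g[of k' a' b'] \<open>x \<in> S\<close> \<open>x' \<in> S\<close> e by (metis x x')+
    then have "a = a'" and kb: "k * p + b = k' * p + b'"
      by (simp_all only: add_left_cancel of_nat_eq_iff)
    moreover have bp: "b < p" "b' < p"
      using S \<open>x \<in> S\<close> \<open>x' \<in> S\<close> by (auto simp: x x')
    then have "b = b'"
      using arg_cong[OF kb, of "\<lambda>n. n mod p"] by simp
    moreover have "0 < p"
      using bp by simp
    moreover have "k = k'"
      using kb \<open>b = b'\<close> \<open>0 < p\<close> by simp
    ultimately show "x = x'"
      by (simp add: x x')
  qed
  have "g ` S \<subseteq> anchored_sets s p (int N)"
  proof (rule image_subsetI)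
    fix x assume "x \<in> S"
    then show "g x \<in> anchored_sets s p (int N)"
      using g by (cases x) blast
  qed
  have "(\<Sum>x\<in>S. Phi_alpha \<phi> m \<alpha> (pat_of W (g x))) = (\<Sum>B\<in>g ` S. Phi_alpha \<phi> m \<alpha> (pat_of W B))"
    by (simp add: sum.reindex[OF \<open>inj_on g S\<close>])
  also have "\<dots> \<le> period_energy (Phi_alpha \<phi> m \<alpha>) W s p (int N)"
    by (rule period_energy_ge_sum[OF Phi_alpha_nonneg \<open>g ` S \<subseteq> anchored_sets s p (int N)\<close>])
  finally have "(\<Sum>x\<in>S. Phi_alpha \<phi> m \<alpha> (pat_of W (g x))) \<le> period_energy (Phi_alpha \<phi> m \<alpha>) W s p (int N)" .
  moreover have "1 / real N powr \<alpha> \<le> Phi_alpha \<phi> m \<alpha> (pat_of W (g x))" if "x \<in> S" for x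
  proof -
    obtain k a b where x: "x = (k, a, b)"
      by (cases x) auto
    then have "a \<in> A k" "b \<in> B k" "k \<in> Ks"
      using that by (auto simp: S_def)
    define n where "n = k * p + b - a"
    have "0 < n" "n \<le> N"
      using S[of k a b] that x by (auto simp: n_def)
    then have "1 / real N powr \<alpha> \<le> 1 / real n powr \<alpha>"
      using \<alpha> by (intro divide_left_mono powr_mono2) auto
    then show ?thesis
      using pairs[OF \<open>k \<in> Ks\<close> \<open>a \<in> A k\<close> \<open>b \<in> B k\<close>] by (simp add: x g_def n_def)
  qed
  then have "real (card S) / real N powr \<alpha> \<le> (\<Sum>x\<in>S. Phi_alpha \<phi> m \<alpha> (pat_of W (g x)))"
    using sum_mono[of S "\<lambda>_. 1 / real N powr \<alpha>"] by simp
  moreover have "real (card S) = (\<Sum>k\<in>Ks. real (card (A k) * card (B k)))"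
  proof -
    have "finite (A k \<times> B k)" if "k \<in> Ks" for k
      using AB[OF that] finite_subset by blast
    then show ?thesis
      unfolding S_def using Ks(1) by (simp add: card_cartesian_product)
  qed
  ultimately show ?thesis
    by simp
qed

text \<open>The exponent \<open>3 - 2 \<alpha> \<ge> 0\<close> of \<open>p\<close> left over in this estimate is where \<open>\<alpha> \<le> 3/2\<close> is needed.\<close>
lemma pair_energy_estimate:
  fixes K p :: nat and c \<beta> \<alpha> X :: real
  assumes K: "1 \<le> K" "real K \<le> \<beta> * real p / c" and p: "1 \<le> p" and c: "0 < c" and \<beta>: "0 < \<beta>"
    and \<alpha>: "1 < \<alpha>" "\<alpha> \<le> 3/2" and X: "0 \<le> X"
  shows "X\<^sup>2 / 2 * 2 powr (-\<alpha>) * (\<beta> / c) powr (1 - \<alpha>)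
           \<le> real K / 2 * (X * real p)\<^sup>2 / (2 * real K * real p) powr \<alpha>"
proof -
  define C where "C = X\<^sup>2 / 2 * 2 powr (-\<alpha>)"
  have "0 \<le> C"
    by (simp add: C_def)
  have "real K / 2 * (X * real p)\<^sup>2 / (2 * real K * real p) powr \<alpha>
          = C * real K powr (1 - \<alpha>) * real p powr (2 - \<alpha>)"
    using K(1) p by (simp add: C_def powr_mult powr_diff powr_minus field_simps power2_eq_square)
  moreover have "(\<beta> / c) powr (1 - \<alpha>) * real p powr (1 - \<alpha>) \<le> real K powr (1 - \<alpha>)"
  proof -
    have "(\<beta> * real p / c) powr (1 - \<alpha>) \<le> real K powr (1 - \<alpha>)"
      using K \<alpha> by (intro powr_mono2') auto
    then show ?thesis
      using \<beta> c p by (simp add: powr_mult powr_divide)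
  qed
  then have "C * ((\<beta> / c) powr (1 - \<alpha>) * real p powr (1 - \<alpha>)) * real p powr (2 - \<alpha>)
               \<le> C * real K powr (1 - \<alpha>) * real p powr (2 - \<alpha>)"
    using \<open>0 \<le> C\<close> by (intro mult_right_mono mult_left_mono) auto
  moreover have "C * (\<beta> / c) powr (1 - \<alpha>) * 1 \<le> C * (\<beta> / c) powr (1 - \<alpha>) * real p powr (3 - 2 * \<alpha>)"
    using \<open>0 \<le> C\<close> p \<alpha> by (intro mult_left_mono ge_one_powr_ge_zero) auto
  moreover have "real p powr (1 - \<alpha>) * real p powr (2 - \<alpha>) = real p powr (3 - 2 * \<alpha>)"
    by (simp add: powr_add[symmetric])
  ultimately show ?thesis
    by (simp add: C_def mult.assoc)
qed

lemma badly_approximable_const_lt: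
  fixes \<phi> c :: real
  assumes "\<forall>a b::int. b > 0 \<longrightarrow> \<bar>\<phi> - of_int a / of_int b\<bar> > c / (of_int b)\<^sup>2" "\<phi> < 1"
  shows "c < 1 - \<phi>"
  using assms(1)[rule_format, of 1 1] assms(2) by simp

text \<open>For long periods, with \<open>\<theta> = p \<phi> - round (p \<phi>)\<close> and \<open>K \<approx> (1 - \<phi>) / |\<theta>|\<close>, each shift
  \<open>k p\<close> with \<open>K/2 \<le> k \<le> K\<close> produces \<open>\<ge> (c (1 - \<phi>) p / 16)\<^sup>2\<close> forbidden pairs at distance
  \<open>\<le> 2 K p\<close>; bad approximability bounds \<open>K\<close> by \<open>(1 - \<phi>) p / c\<close>.\<close>
lemma period_energy_large_period:
  fixes \<phi> c \<alpha> y :: real and p :: nat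
  assumes badly: "\<forall>a b::int. b > 0 \<longrightarrow> \<bar>\<phi> - of_int a / of_int b\<bar> > c / (of_int b)\<^sup>2" and c: "0 < c"
    and \<phi>: "3/4 < \<phi>" "\<phi> < 1" and big: "16 \<le> c * (1 - \<phi>) * real p" and \<alpha>: "1 < \<alpha>" "\<alpha> \<le> 3/2"
    and p: "0 < p" and per: "\<And>n. W (n + int p) = W n"
    and blk: "\<And>i. i < p \<Longrightarrow> W (s + int i) = (\<phi> \<le> frac (y + real i * \<phi>))"
  shows "\<exists>R. (c * (1 - \<phi>) / 16)\<^sup>2 / 2 * 2 powr (-\<alpha>) * ((1 - \<phi>) / c) powr (1 - \<alpha>)
               \<le> period_energy (Phi_alpha \<phi> m \<alpha>) W s p R"
proof -
  define \<beta> where "\<beta> = 1 - \<phi>"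
  define X where "X = c * \<beta> / 16"
  define r where "r = round (real p * \<phi>)"
  define \<theta> where "\<theta> = real p * \<phi> - of_int r"
  have \<theta>_le: "\<bar>\<theta>\<bar> \<le> 1/2"
    using of_int_round_abs_le[of "real p * \<phi>"] by (simp add: \<theta>_def r_def abs_minus_commute)
  have \<theta>_gt: "c / real p < \<bar>\<theta>\<bar>"
    using badly_approximable_gap[OF badly p] by (simp add: \<theta>_def)
  then have \<theta>_pos: "0 < \<bar>\<theta>\<bar>"
    using c p by (smt (verit) divide_pos_pos of_nat_0_less_iff)
  have \<beta>: "0 < \<beta>" "\<beta> < 1/4" "c < \<beta>"
    using \<phi> badly_approximable_const_lt[OF badly \<phi>(2)] by (auto simp: \<beta>_def)
  define K where "K = max 1 (nat \<lfloor>\<beta> / \<bar>\<theta>\<bar>\<rfloor>)"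
  define Ks where "Ks = {K div 2 + 1..K}"
  have K: "1 \<le> K" "real K \<le> max 1 (\<beta> / \<bar>\<theta>\<bar>)" "\<beta> / \<bar>\<theta>\<bar> < real K + 1"
  proof -
    have "0 \<le> \<beta> / \<bar>\<theta>\<bar>"
      using \<beta> by simp
    then have "real (nat \<lfloor>\<beta> / \<bar>\<theta>\<bar>\<rfloor>) = of_int \<lfloor>\<beta> / \<bar>\<theta>\<bar>\<rfloor>"
      by simp
    moreover have "real K = max 1 (real (nat \<lfloor>\<beta> / \<bar>\<theta>\<bar>\<rfloor>))"
      by (simp add: K_def of_nat_max)
    ultimately have "real K = max 1 (of_int \<lfloor>\<beta> / \<bar>\<theta>\<bar>\<rfloor>)"
      by simp
    then show "real K \<le> max 1 (\<beta> / \<bar>\<theta>\<bar>)" "\<beta> / \<bar>\<theta>\<bar> < real K + 1"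
      using floor_correct[of "\<beta> / \<bar>\<theta>\<bar>"] by (auto simp: max_def)
    show "1 \<le> K"
      by (simp add: K_def)
  qed
  have K_upper: "real K \<le> \<beta> * real p / c"
  proof -
    have "\<beta> / \<bar>\<theta>\<bar> \<le> \<beta> / (c / real p)"
      using \<theta>_gt \<beta>(1) \<theta>_pos c p by (intro divide_left_mono) (simp_all add: less_imp_le)
    then have "\<beta> / \<bar>\<theta>\<bar> \<le> \<beta> * real p / c"
      by simp
    moreover have "1 \<le> \<beta> * real p / c"
    proof -
      have "\<beta> * 1 \<le> \<beta> * real p"
        using \<beta> p by (intro mult_left_mono) auto
      then have "c \<le> \<beta> * real p"
        using \<beta>(3) by linarith
      then show ?thesis
        using c by (simp add: le_divide_eq)
    qed
    ultimately have "max 1 (\<beta> / \<bar>\<theta>\<bar>) \<le> \<beta> * real p / c"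
      by (rule max.boundedI[rotated])
    then show ?thesis
      using K(2) by linarith
  qed
  have Kt: "real K * \<bar>\<theta>\<bar> \<le> 2 * \<phi> - 1" "\<beta> < (real K + 1) * \<bar>\<theta>\<bar>"
  proof -
    have "real K * \<bar>\<theta>\<bar> \<le> max 1 (\<beta> / \<bar>\<theta>\<bar>) * \<bar>\<theta>\<bar>"
      using K(2) by (intro mult_right_mono) auto
    also have "\<dots> = max \<bar>\<theta>\<bar> \<beta>"
      using \<theta>_pos by (simp add: max_def)
    finally show "real K * \<bar>\<theta>\<bar> \<le> 2 * \<phi> - 1"
      using \<theta>_le \<beta> \<phi> by (simp add: \<beta>_def)
    show "\<beta> < (real K + 1) * \<bar>\<theta>\<bar>"
      using K(3) \<theta>_pos by (simp add: field_simps)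
  qed
  have "\<forall>k\<in>Ks. \<exists>AB. fst AB \<subseteq> {..<p} \<and> snd AB \<subseteq> {..<p} \<and>
          X * real p \<le> real (card (fst AB)) \<and> X * real p \<le> real (card (snd AB)) \<and>
          (\<forall>a\<in>fst AB. \<forall>b\<in>snd AB. Phi_alpha \<phi> m \<alpha> (pat_of W {s + int a, s + int (k * p + b)})
                                     = 1 / real (k * p + b - a) powr \<alpha>)"
  proof
    fix k assume "k \<in> Ks"
    then have k: "1 \<le> k" "k \<le> K" "K + 1 \<le> 2 * k"
      using K(1) by (auto simp: Ks_def)
    define len where "len = min (real k * \<bar>\<theta>\<bar>) \<beta> / 2"
    have "real (K + 1) \<le> real (2 * k)"
      using k(3) by (simp only: of_nat_le_iff)
    then have "(real K + 1) * \<bar>\<theta>\<bar> \<le> (2 * real k) * \<bar>\<theta>\<bar>"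
      by (intro mult_right_mono) simp_all
    then have lower: "\<beta> / 2 < real k * \<bar>\<theta>\<bar>"
      using Kt(2) by (simp add: mult.assoc)
    have "real k * \<bar>\<theta>\<bar> \<le> real K * \<bar>\<theta>\<bar>"
      using k(2) by (intro mult_right_mono) simp_all
    then have upper: "real k * \<bar>\<theta>\<bar> \<le> 2 * \<phi> - 1"
      using Kt(1) by linarith
    have len: "0 \<le> len" "2 * len \<le> real k * \<bar>\<theta>\<bar>" "len \<le> 1 - \<phi>" "\<beta> / 4 \<le> len"
      using lower \<beta>(1) by (auto simp: len_def \<beta>_def min_def)
    have "X * real p \<le> c * real p * len - 3"
    proof -
      have "c * real p * (\<beta> / 4) \<le> c * real p * len"
        using len(4) c by (intro mult_left_mono) auto
      moreover have "c * real p * (\<beta> / 4) = c * \<beta> * real p / 4" "X * real p = c * \<beta> * real p / 16"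
        by (simp_all add: X_def)
      moreover have "16 \<le> c * \<beta> * real p"
        using big by (simp add: \<beta>_def)
      ultimately show ?thesis
        by linarith
    qed
    moreover obtain A B where "A \<subseteq> {..<p}" "B \<subseteq> {..<p}"
      "c * real p * len - 3 \<le> real (card A)" "c * real p * len - 3 \<le> real (card B)"
      "\<And>a b. a \<in> A \<Longrightarrow> b \<in> B \<Longrightarrow>
         Phi_alpha \<phi> m \<alpha> (pat_of W {s + int a, s + int (k * p + b)}) = 1 / real (k * p + b - a) powr \<alpha>"
      using forbidden_pairs_from_hits[OF badly c _ _ p per blk \<theta>_def k(1) len(1,2) upper len(3), where m = m and \<alpha> = \<alpha>] \<phi>
      by auto
    ultimately show "\<exists>AB. fst AB \<subseteq> {..<p} \<and> snd AB \<subseteq> {..<p} \<and>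
          X * real p \<le> real (card (fst AB)) \<and> X * real p \<le> real (card (snd AB)) \<and>
          (\<forall>a\<in>fst AB. \<forall>b\<in>snd AB. Phi_alpha \<phi> m \<alpha> (pat_of W {s + int a, s + int (k * p + b)})
                                     = 1 / real (k * p + b - a) powr \<alpha>)"
      by (intro exI[of _ "(A, B)"]) auto
  qed
  then obtain AB where AB: "\<And>k. k \<in> Ks \<Longrightarrow> fst (AB k) \<subseteq> {..<p} \<and> snd (AB k) \<subseteq> {..<p} \<and>
          X * real p \<le> real (card (fst (AB k))) \<and> X * real p \<le> real (card (snd (AB k))) \<and>
          (\<forall>a\<in>fst (AB k). \<forall>b\<in>snd (AB k). Phi_alpha \<phi> m \<alpha> (pat_of W {s + int a, s + int (k * p + b)})
                                     = 1 / real (k * p + b - a) powr \<alpha>)"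
    by metis
  define N where "N = 2 * K * p"
  have "(\<Sum>k\<in>Ks. real (card (fst (AB k)) * card (snd (AB k)))) / real N powr \<alpha>
          \<le> period_energy (Phi_alpha \<phi> m \<alpha>) W s p (int N)"
  proof (rule period_energy_ge_pairs)
    show "1 \<le> k \<and> (k + 1) * p \<le> N" if "k \<in> Ks" for k
    proof -
      have "1 \<le> k" "k + 1 \<le> 2 * K"
        using that K(1) by (auto simp: Ks_def)
      then have "(k + 1) * p \<le> (2 * K) * p"
        by (intro mult_right_mono) auto
      then show ?thesis
        using \<open>1 \<le> k\<close> by (simp add: N_def)
    qed
  qed (use AB \<alpha> in \<open>auto simp: Ks_def\<close>)
  moreover have "real K / 2 * (X * real p)\<^sup>2 \<le> (\<Sum>k\<in>Ks. real (card (fst (AB k)) * card (snd (AB k))))"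
  proof -
    have "real K / 2 \<le> real (card Ks)"
      by (simp add: Ks_def)
    moreover have "(X * real p)\<^sup>2 \<le> real (card (fst (AB k)) * card (snd (AB k)))" if "k \<in> Ks" for k
    proof -
      have "X * real p \<le> real (card (fst (AB k)))" "X * real p \<le> real (card (snd (AB k)))"
        using AB[OF that] by blast+
      moreover have "0 \<le> X * real p"
        using c \<beta> by (simp add: X_def)
      ultimately show ?thesis
        unfolding power2_eq_square of_nat_mult by (intro mult_mono) auto
    qed
    then have "real (card Ks) * (X * real p)\<^sup>2 \<le> (\<Sum>k\<in>Ks. real (card (fst (AB k)) * card (snd (AB k))))"
      using sum_mono[of Ks "\<lambda>_. (X * real p)\<^sup>2"] by simp
    ultimately show ?thesis
      using mult_right_mono[of "real K / 2" "real (card Ks)" "(X * real p)\<^sup>2"] by simp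
  qed
  then have "real K / 2 * (X * real p)\<^sup>2 / real N powr \<alpha>
               \<le> (\<Sum>k\<in>Ks. real (card (fst (AB k)) * card (snd (AB k)))) / real N powr \<alpha>"
    by (intro divide_right_mono) auto
  moreover have "X\<^sup>2 / 2 * 2 powr (-\<alpha>) * (\<beta> / c) powr (1 - \<alpha>) \<le> real K / 2 * (X * real p)\<^sup>2 / real N powr \<alpha>"
  proof -
    have "1 \<le> p" "0 \<le> X"
      using p c \<beta> by (simp_all add: X_def)
    moreover have "real N = 2 * real K * real p"
      by (simp add: N_def)
    ultimately show ?thesis
      using pair_energy_estimate[OF K(1) K_upper _ c \<beta>(1) \<alpha>, of X] by simp
  qed
  ultimately have "X\<^sup>2 / 2 * 2 powr (-\<alpha>) * (\<beta> / c) powr (1 - \<alpha>) \<le> period_energy (Phi_alpha \<phi> m \<alpha>) W s p (int N)"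
    by linarith
  then show ?thesis
    unfolding X_def \<beta>_def by blast
qed

text \<open>For short periods a single violation suffices: either the block contains a \<open>1\<close>, and then so
  does the position \<open>k p\<close> further, with \<open>k = \<lceil>(1 - \<phi>) / |\<theta>|\<rceil>\<close> making the distance forbidden, or
  the periodic word is identically \<open>0\<close>.\<close>
lemma period_energy_small_period:
  fixes \<phi> c \<alpha> y :: real and p P :: nat
  assumes badly: "\<forall>a b::int. b > 0 \<longrightarrow> \<bar>\<phi> - of_int a / of_int b\<bar> > c / (of_int b)\<^sup>2" and c: "0 < c"
    and \<phi>: "3/4 < \<phi>" "\<phi> < 1" and pP: "p \<le> P" and \<alpha>: "0 < \<alpha>" and m: "1 \<le> m"
    and p: "0 < p" and per: "\<And>n. W (n + int p) = W n"
    and blk: "\<And>i. i < p \<Longrightarrow> W (s + int i) = (\<phi> \<le> frac (y + real i * \<phi>))"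
  shows "\<exists>R. min 1 (1 / (((1 - \<phi>) * real P / c + 1) * real P) powr \<alpha>)
               \<le> period_energy (Phi_alpha \<phi> m \<alpha>) W s p R"
proof (cases "\<exists>a<p. \<phi> \<le> frac (y + real a * \<phi>)")
  case True
  then obtain a where a: "a < p" "\<phi> \<le> frac (y + real a * \<phi>)"
    by blast
  define \<beta> where "\<beta> = 1 - \<phi>"
  define r where "r = round (real p * \<phi>)"
  define \<theta> where "\<theta> = real p * \<phi> - of_int r"
  have \<theta>_le: "\<bar>\<theta>\<bar> \<le> 1/2"
    using of_int_round_abs_le[of "real p * \<phi>"] by (simp add: \<theta>_def r_def abs_minus_commute)
  have \<theta>_gt: "c / real p < \<bar>\<theta>\<bar>"
    using badly_approximable_gap[OF badly p] by (simp add: \<theta>_def)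
  moreover have "0 < c / real p"
    using c p by simp
  ultimately have \<theta>_pos: "0 < \<bar>\<theta>\<bar>"
    by linarith
  have \<beta>: "0 < \<beta>" "\<beta> < 1/4"
    using \<phi> by (auto simp: \<beta>_def)
  define k where "k = nat \<lceil>\<beta> / \<bar>\<theta>\<bar>\<rceil>"
  have "0 < \<beta> / \<bar>\<theta>\<bar>"
    using \<beta> \<theta>_pos by simp
  then have k_real: "real k = of_int \<lceil>\<beta> / \<bar>\<theta>\<bar>\<rceil>"
    by (simp add: k_def)
  then have k23: "\<beta> / \<bar>\<theta>\<bar> \<le> real k" "real k < \<beta> / \<bar>\<theta>\<bar> + 1"
    using ceiling_correct[of "\<beta> / \<bar>\<theta>\<bar>"] by linarith+
  then have "0 < real k"
    using \<open>0 < \<beta> / \<bar>\<theta>\<bar>\<close> by linarith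
  then have k: "1 \<le> k" "\<beta> / \<bar>\<theta>\<bar> \<le> real k" "real k < \<beta> / \<bar>\<theta>\<bar> + 1"
    using k23 by simp_all
  have k\<theta>: "\<beta> \<le> real k * \<bar>\<theta>\<bar>" "real k * \<bar>\<theta>\<bar> < \<beta> + \<bar>\<theta>\<bar>"
    using k(2,3) \<theta>_pos by (simp_all add: field_simps)
  define z :: int where "z = (if 0 < \<theta> then 0 else 1)"
  have "real k * \<theta> + of_int z \<in> {1 - \<phi>..\<phi>}"
  proof (cases "0 < \<theta>")
    case True
    then have "real k * \<theta> = real k * \<bar>\<theta>\<bar>"
      by simp
    then show ?thesis
      using True k\<theta> \<theta>_le \<phi> by (simp add: z_def \<beta>_def)
  next
    case False
    then have "real k * \<theta> = - (real k * \<bar>\<theta>\<bar>)"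
      by simp
    then show ?thesis
      using False k\<theta> \<theta>_le \<phi> by (simp add: z_def \<beta>_def)
  qed
  then have energy: "Phi_alpha \<phi> m \<alpha> (pat_of W {s + int a, s + int (k * p + a)}) = 1 / real (k * p + a - a) powr \<alpha>"
    using forbidden_pair_in_block[OF _ \<phi>(2) per blk k(1) a(1) a(1) a(2) a(2), where r = r and z = z] \<phi>
    by (simp add: \<theta>_def)
  have "real k \<le> \<beta> * real P / c + 1"
  proof -
    have "\<beta> / \<bar>\<theta>\<bar> \<le> \<beta> / (c / real p)"
      using \<theta>_gt \<beta>(1) \<theta>_pos c p by (intro divide_left_mono) (simp_all add: less_imp_le)
    also have "\<dots> \<le> \<beta> * real P / c"
      using \<beta>(1) c pP by (simp add: divide_right_mono mult_left_mono)
    finally show ?thesis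
      using k(3) by linarith
  qed
  then have "real k * real p \<le> (\<beta> * real P / c + 1) * real P"
    using pP by (intro mult_mono) auto
  moreover have kp: "0 < real k * real p"
    using k(1) p by simp
  ultimately have le: "(real k * real p) powr \<alpha> \<le> (((1 - \<phi>) * real P / c + 1) * real P) powr \<alpha>"
    using \<alpha> by (intro powr_mono2) (simp_all add: \<beta>_def)
  have pos: "0 < (real k * real p) powr \<alpha>"
    using k(1) p by simp
  have inverse_anti: "1 / B \<le> 1 / A" if "0 < A" "A \<le> B" for A B :: real
    using that by (intro divide_left_mono mult_pos_pos) simp_all
  have "1 / (((1 - \<phi>) * real P / c + 1) * real P) powr \<alpha> \<le> 1 / (real k * real p) powr \<alpha>"
    by (rule inverse_anti[OF pos le])
  also have "\<dots> = Phi_alpha \<phi> m \<alpha> (pat_of W {s + int a, s + int (k * p + a)})"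
    using energy by simp
  also have "\<dots> \<le> period_energy (Phi_alpha \<phi> m \<alpha>) W s p (int (k * p + a))"
  proof -
    have "p \<le> k * p"
      using k(1) by simp
    then have "{s + int a, s + int (k * p + a)} \<in> anchored_sets s p (int (k * p + a))"
      using a(1) by (auto simp: anchored_sets_def min_def)
    then show ?thesis
      using period_energy_ge_sum[OF Phi_alpha_nonneg, of "{{s + int a, s + int (k * p + a)}}"] by simp
  qed
  finally show ?thesis
    by (intro exI) (rule min.coboundedI2)
next
  case False
  have "\<not> W n" for n
  proof -
    define i where "i = (n - s) mod int p"
    have i: "0 \<le> i" "i < int p"
      using p by (simp_all add: i_def)
    have "n = (s + int (nat i)) + ((n - s) div int p) * int p"
      using i by (simp add: i_def algebra_simps)
    then have "W n = W (s + int (nat i))"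
      using periodic_add_mult[where W = W, OF per] by metis
    also have "\<dots> = (\<phi> \<le> frac (y + real (nat i) * \<phi>))"
      using i by (intro blk) linarith
    finally show ?thesis
      using False i by (metis nat_less_iff)
  qed
  then have "pat_of W {s..s + int m - 1} = zeros_pat m"
    using m by (intro pat_of_zeros) auto
  then have "1 \<le> Phi_alpha \<phi> m \<alpha> (pat_of W {s..s + int m - 1})"
    by (simp add: Phi_alpha_def)
  also have "\<dots> \<le> period_energy (Phi_alpha \<phi> m \<alpha>) W s p (int m - 1)"
  proof -
    have "Min {s..s + int m - 1} = s"
      using m by (intro Min_eqI) auto
    then have "{s..s + int m - 1} \<in> anchored_sets s p (int m - 1)"
      using m p by (auto simp: anchored_sets_def)
    then show ?thesis
      using period_energy_ge_sum[OF Phi_alpha_nonneg, of "{{s..s + int m - 1}}"] by simp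
  qed
  finally show ?thesis
    by (intro exI) (rule min.coboundedI1)
qed

lemma period_energy_Phi_alpha_lower_bound:
  assumes \<phi>: "3/4 < \<phi>" "\<phi> < 1" and "badly_approximable \<phi>" and \<alpha>: "1 < \<alpha>" "\<alpha> \<le> 3/2" and m: "1 \<le> m"
  obtains E where "0 < E"
    "\<And>W p s x. 0 < p \<Longrightarrow> (\<And>n. W (n + int p) = W n) \<Longrightarrow>
       (\<And>n. n \<in> {s..<s + int p} \<Longrightarrow> W n = rotation_coding \<phi> x n) \<Longrightarrow>
       \<exists>R. E \<le> period_energy (Phi_alpha \<phi> m \<alpha>) W s p R"
proof -
  from assms(3) obtain c where c: "0 < c"
    and badly: "\<forall>a b::int. b > 0 \<longrightarrow> \<bar>\<phi> - of_int a / of_int b\<bar> > c / (of_int b)\<^sup>2"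
    unfolding badly_approximable_def by blast
  define P where "P = nat \<lceil>16 / (c * (1 - \<phi>))\<rceil>"
  define E where "E = min ((c * (1 - \<phi>) / 16)\<^sup>2 / 2 * 2 powr (-\<alpha>) * ((1 - \<phi>) / c) powr (1 - \<alpha>))
                          (min 1 (1 / (((1 - \<phi>) * real P / c + 1) * real P) powr \<alpha>))"
  have "0 < 16 / (c * (1 - \<phi>))"
    using c \<phi> by simp
  then have "0 < real P"
    by (simp add: P_def)
  moreover have "0 \<le> (1 - \<phi>) * real P / c"
    using c \<phi> by simp
  then have "(1 - \<phi>) * real P / c + 1 \<noteq> 0"
    by linarith
  ultimately have "0 < E"
    using c \<phi> by (simp add: E_def)
  moreover have bound: "\<exists>R. E \<le> period_energy (Phi_alpha \<phi> m \<alpha>) W s p R"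
    if p: "0 < p" and per: "\<And>n. W (n + int p) = W n"
      and coding: "\<And>n. n \<in> {s..<s + int p} \<Longrightarrow> W n = rotation_coding \<phi> x n" for W p s x
  proof -
    define y where "y = x + of_int s * \<phi>"
    have blk: "W (s + int i) = (\<phi> \<le> frac (y + real i * \<phi>))" if "i < p" for i
      using coding[of "s + int i"] that by (simp add: rotation_coding_def y_def algebra_simps)
    show ?thesis
    proof (cases "P \<le> p")
      case True
      have "16 / (c * (1 - \<phi>)) \<le> real p"
        using True by (simp add: P_def nat_le_iff ceiling_le_iff)
      then have "16 \<le> c * (1 - \<phi>) * real p"
        using c \<phi> by (simp add: field_simps)
      then obtain R where "(c * (1 - \<phi>) / 16)\<^sup>2 / 2 * 2 powr (-\<alpha>) * ((1 - \<phi>) / c) powr (1 - \<alpha>)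
                             \<le> period_energy (Phi_alpha \<phi> m \<alpha>) W s p R"
        using period_energy_large_period[where W = W and s = s and y = y and m = m, OF badly c \<phi> _ \<alpha> p per blk]
        by blast
      then show ?thesis
        by (intro exI[of _ R] order_trans[OF _ \<open>_ \<le> period_energy _ W s p R\<close>]) (simp add: E_def)
    next
      case False
      then have "p \<le> P" "0 < \<alpha>"
        using \<alpha> by simp_all
      then obtain R where "min 1 (1 / (((1 - \<phi>) * real P / c + 1) * real P) powr \<alpha>)
                             \<le> period_energy (Phi_alpha \<phi> m \<alpha>) W s p R"
        using period_energy_small_period[where W = W and s = s and y = y, OF badly c \<phi> _ _ m p per blk]
        by blast
      then show ?thesis
        by (intro exI[of _ R] order_trans[OF _ \<open>_ \<le> period_energy _ W s p R\<close>]) (simp only: E_def min.cobounded2)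
    qed
  qed
  ultimately show thesis
    by (rule that)
qed

theorem theorem4p5:
  fixes \<phi> \<alpha> :: real and m :: nat and X :: config
  assumes "3/4 < \<phi>" and "\<phi> < 1" and "badly_approximable \<phi>"
    and "1 < \<alpha>" and "\<alpha> \<le> 3/2"
    and "good_m \<phi> m"
    and "sturmian \<phi> X"
  shows "\<forall>P. finite P \<and> P \<subseteq> patterns \<longrightarrow>
           (\<exists>lam>0. \<forall>\<Phi>'. perturbation lam P (Phi_alpha \<phi> m \<alpha>) \<Phi>' \<longrightarrow>
              (\<forall>W \<in> PS \<phi>. density \<Phi>' X \<le> density \<Phi>' W))"
proof (intro allI impI)
  fix P :: "pattern set"
  assume "finite P \<and> P \<subseteq> patterns"
  then have P: "finite P" "P \<subseteq> patterns"
    by auto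
  have \<phi>: "0 < \<phi>" "\<phi> < 1"
    using assms(1,2) by auto
  obtain F K where freq:
    "\<And>q Y x a L. q \<in> P \<Longrightarrow> (\<forall>n\<in>{a..<a + int L}. Y n = rotation_coding \<phi> x n) \<Longrightarrow>
       \<bar>(\<Sum>n<L. of_bool (occurs_at Y q (a + int n))) - real L * F q\<bar> \<le> K q"
    and K: "\<And>q. q \<in> P \<Longrightarrow> 0 \<le> K q"
    using rotation_coding_occurrence_discrepancies[OF \<phi> P(2)] by blast
  obtain E where "0 < E" and energy: "\<And>W p s x. 0 < p \<Longrightarrow> (\<And>n. W (n + int p) = W n) \<Longrightarrow>
       (\<And>n. n \<in> {s..<s + int p} \<Longrightarrow> W n = rotation_coding \<phi> x n) \<Longrightarrow>
       \<exists>R. E \<le> period_energy (Phi_alpha \<phi> m \<alpha>) W s p R"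
    using period_energy_Phi_alpha_lower_bound[OF assms(1-5) good_m_pos[OF assms(6,7)]] by blast
  define lam where "lam = E / ((\<Sum>q\<in>P. K q) + 1)"
  have "0 \<le> (\<Sum>q\<in>P. K q)"
    using K by (simp add: sum_nonneg)
  then have lam: "0 < lam" "lam * (\<Sum>q\<in>P. K q) \<le> E"
    using \<open>0 < E\<close> by (simp_all add: lam_def field_simps)
  show "\<exists>lam>0. \<forall>\<Phi>'. perturbation lam P (Phi_alpha \<phi> m \<alpha>) \<Phi>' \<longrightarrow>
          (\<forall>W \<in> PS \<phi>. density \<Phi>' X \<le> density \<Phi>' W)"
  proof (intro exI[of _ lam] conjI allI impI ballI)
    fix \<Phi>' W assume pert: "perturbation lam P (Phi_alpha \<phi> m \<alpha>) \<Phi>'" and "W \<in> PS \<phi>"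
    obtain p s x where p: "0 < p" and per: "\<And>n. W (n + int p) = W n"
      and coding: "\<And>n. n \<in> {s..<s + int p} \<Longrightarrow> W n = rotation_coding \<phi> x n"
      using PS_rotation_block[OF \<open>W \<in> PS \<phi>\<close> \<phi>] by blast
    obtain R where "E \<le> period_energy (Phi_alpha \<phi> m \<alpha>) W s p R"
      using energy[OF p per coding] by blast
    have "density \<Phi>' X \<le> ereal (\<Sum>q\<in>P. (\<Phi>' q - Phi_alpha \<phi> m \<alpha> q) * F q)"
    proof (rule density_perturbation_le[OF P pert ham_Phi_alpha_sturmian[OF assms(6,7)]])
      fix q a L assume "q \<in> P"
      obtain y where "\<And>n. n \<in> {a..<a + int L} \<Longrightarrow> X n = rotation_coding \<phi> y n"
        using sturmian_agrees_with_rotation_coding[OF assms(7) \<phi>] by blast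
      then show "\<bar>(\<Sum>n<L. of_bool (occurs_at X q (a + int n))) - real L * F q\<bar> \<le> K q"
        using freq[OF \<open>q \<in> P\<close>] by blast
    qed
    also have "\<dots> \<le> density \<Phi>' W"
    proof (rule density_perturbation_periodic_ge[where W = W, OF P pert Phi_alpha_nonneg p per])
      show "\<bar>(\<Sum>n<p. of_bool (occurs_at W q (s + int n))) - real p * F q\<bar> \<le> K q" if "q \<in> P" for q
        using freq[OF that] coding by blast
      show "lam * (\<Sum>q\<in>P. K q) \<le> period_energy (Phi_alpha \<phi> m \<alpha>) W s p R"
        using lam(2) \<open>E \<le> _\<close> by linarith
    qed
    finally show "density \<Phi>' X \<le> density \<Phi>' W" .
  qed (rule lam(1))
qed

end
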